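(* Let $r\ge 2$. For every $n\in\mathbb{N}$ there exists $r_n>0$ such that the infinite product \[\prod_{a\in A,\ a\neq 0} \bigl(1+f_a(u)\bigr)\] converges uniformly for $(u,\omega')\in B(0,r_n)\times \Omega^{r-1}_n$, where $B(0,r_n)=\{z\in\mathbb{C}_\infty : |z|<r_n\}$. Here $f_a$ denotes the polynomial attached to the lattice $\Lambda'=A^{r-1}\omega'$ as in the context (so $f_a$ depends on $\omega'$), and $u$ is regarded as an independent variable in $B(0,r_n)$.
   Context: Let $q$ be a prime power, $A=\mathbb{F}_q[t]$, $F=\mathbb{F}_q(t)$, $F_\infty=\mathbb{F}_q((1/t))$ with absolute value $|f/g|=q^{\deg f-\deg g}$, and $\mathbb{C}_\infty$ the completion of an algebraic closure of $F_\infty$. Fix $\xi=\sqrt[q-1]{-t^q}\prod_{i\ge1}\bigl(1-\frac{t^{q^i}-t}{t^{q^{i+1}}-t}\bigr)$ (for a fixed choice of the $(q-1)$-th root). For $m\ge1$, $\Omega^m$ is the Drinfeld period domain: the set of column vectors $\omega'=[\omega_2,\dots,\omega_{m+1}]^T\in\mathbb{C}_\infty^m$ with last entry equal to $\xi$ whose entries are $F_\infty$-linearly independent (i.e. points of $\mathbb{P}^{m-1}(\mathbb{C}_\infty)$ off all $F_\infty$-rational hyperplanes, normalized so the last coordinate is $\xi$). For an $F_\infty$-rational hyperplane $H$, write it as the zero set of $\ell_H(x)=h_1x_1+\dots+h_mx_m$ with $h_j\in F_\infty$ and $\max_j|h_j|=1$. For $\omega'\in\Omega^m$ put $|\omega'|_i=\inf_H|\ell_H(\omega')|$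 (infimum over all $F_\infty$-rational hyperplanes) and $|\omega'|=\max_j|\omega_j|$. For $n\in\mathbb{N}$ let $\Omega^m_n=\{\omega'\in\Omega^m : |\omega'|_i\ge q^{-n}|\omega'|\}$. For a discrete $\mathbb{F}_q$-subspace $L\subset\mathbb{C}_\infty$ (finite intersection with every ball), $e_L(X)=X\prod_{\lambda\in L,\lambda\ne0}(1-X/\lambda)$. If $L$ is moreover an $A$-module, for $a\in A\setminus\{0\}$ let $\varphi^L_a(Z)=aZ\prod_{0\neq\lambda\in a^{-1}L/L}\bigl(1-Z/e_L(\lambda)\bigr)$, the Drinfeld module associated to $L$; it satisfies $e_L(ax)=\varphi^L_a(e_L(x))$. Given $\omega'\in\Omega^{r-1}$, let $\Lambda'=A^{r-1}\omega'=A\omega_2+\dots+A\omega_r$, let $\varphi=\varphi^{\Lambda'}$, and let $\Delta'_a(\omega')$ be the leading coefficient of the polynomial $\varphi_a(X)$ (of degree $q^{(r-1)\deg a}$). For $a\in A\setminus\{0\}$ define the polynomial \[f_a(X)=X^{q^{(r-1)\deg a}}\,\Delta'_a(\omega')^{-1}\,\varphi_a(X^{-1})-1.\] *)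

theory Defs
  imports "HOL-Computational_Algebra.Computational_Algebra" "HOL-Library.Cardinality"
begin

text \<open>F_q is a finite field 'f (q = CARD('f)), A = 'f poly = F_q[t],
  F_infinity = 'f fls (formal Laurent series in the variable X = 1/t),
  C_infinity is a field 'c with an embedding iota of F_infinity and an absolute value nv.\<close>

definition tF :: "'f::field fls" where "tF = fls_X_inv"

definition polyF :: "'f::field poly \<Rightarrow> 'f fls" where
  "polyF p = (\<Sum>i\<le>degree p. fls_const (coeff p i) * tF ^ i)"

text \<open>Absolute value on F_infinity: |f| = q^(deg in t) = q^(- order in 1/t).\<close>
definition absF :: "'f::{finite,field} fls \<Rightarrow> real" where
  "absF f = (if f = 0 then 0 else real CARD('f) powr (- real_of_int (fls_subdegree f)))"

definition conv_nv :: "('c \<Rightarrow> real) \<Rightarrow> (nat \<Rightarrow> 'c::ab_group_add) \<Rightarrow> 'c \<Rightarrow> bool" where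
  "conv_nv nv s L \<longleftrightarrow> (\<lambda>n. nv (s n - L)) \<longlonglongrightarrow> 0"

text \<open>(iota, nv) is a model of C_infinity: a complete algebraically closed nonarchimedean
  valued field containing F_infinity (with its absolute value), in which the algebraic closure
  of F_infinity is dense, i.e. the completion of an algebraic closure of F_infinity.\<close>
definition is_Cinf :: "('f::{finite,field} fls \<Rightarrow> 'c::field) \<Rightarrow> ('c \<Rightarrow> real) \<Rightarrow> bool" where
  "is_Cinf \<iota> nv \<longleftrightarrow>
     (\<forall>x y. \<iota> (x + y) = \<iota> x + \<iota> y) \<and> (\<forall>x y. \<iota> (x * y) = \<iota> x * \<iota> y) \<and> \<iota> 1 = 1 \<and>
     (\<forall>x. nv x \<ge> 0) \<and> (\<forall>x. nv x = 0 \<longleftrightarrow> x = 0) \<and>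
     (\<forall>x y. nv (x * y) = nv x * nv y) \<and> (\<forall>x y. nv (x + y) \<le> max (nv x) (nv y)) \<and>
     (\<forall>f. nv (\<iota> f) = absF f) \<and>
     (\<forall>s. (\<forall>e>0. \<exists>N. \<forall>m\<ge>N. \<forall>n\<ge>N. nv (s m - s n) < e) \<longrightarrow> (\<exists>L. conv_nv nv s L)) \<and>
     (\<forall>p::'c poly. degree p > 0 \<longrightarrow> (\<exists>x. poly p x = 0)) \<and>
     (\<forall>x e. e > 0 \<longrightarrow> (\<exists>y. nv (x - y) < e \<and>
        (\<exists>p::'f fls poly. p \<noteq> 0 \<and> poly (map_poly \<iota> p) y = 0)))"

text \<open>The constant xi, given a chosen (q-1)-th root rho of -t^q.\<close>
definition xi_prod :: "('f::{finite,field} fls \<Rightarrow> 'c::field) \<Rightarrow> ('c \<Rightarrow> real) \<Rightarrow> 'c" where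
  "xi_prod \<iota> nv = (THE P. conv_nv nv (\<lambda>n. \<Prod>i\<in>{1..n}.
      1 - (\<iota> tF ^ (CARD('f) ^ i) - \<iota> tF) / (\<iota> tF ^ (CARD('f) ^ (i + 1)) - \<iota> tF)) P)"

definition xi :: "('f::{finite,field} fls \<Rightarrow> 'c::field) \<Rightarrow> ('c \<Rightarrow> real) \<Rightarrow> 'c \<Rightarrow> 'c" where
  "xi \<iota> nv \<rho> = \<rho> * xi_prod \<iota> nv"

definition Omega :: "('f::{finite,field} fls \<Rightarrow> 'c::field) \<Rightarrow> 'c \<Rightarrow> nat \<Rightarrow> (nat \<Rightarrow> 'c) set" where
  "Omega \<iota> \<xi> m = {w. (\<forall>j\<ge>m. w j = 0) \<and> w (m - 1) = \<xi> \<and>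
     (\<forall>h::nat \<Rightarrow> 'f fls. (\<Sum>j<m. \<iota> (h j) * w j) = 0 \<longrightarrow> (\<forall>j<m. h j = 0))}"

definition imag_norm :: "('f::{finite,field} fls \<Rightarrow> 'c::field) \<Rightarrow> ('c \<Rightarrow> real) \<Rightarrow> nat \<Rightarrow> (nat \<Rightarrow> 'c) \<Rightarrow> real" where
  "imag_norm \<iota> nv m w = Inf {nv (\<Sum>j<m. \<iota> (h j) * w j) | h. (MAX j\<in>{..<m}. absF (h j)) = 1}"

definition vec_norm :: "('c \<Rightarrow> real) \<Rightarrow> nat \<Rightarrow> (nat \<Rightarrow> 'c) \<Rightarrow> real" where
  "vec_norm nv m w = (MAX j\<in>{..<m}. nv (w j))"

definition Omega_n :: "('f::{finite,field} fls \<Rightarrow> 'c::field) \<Rightarrow> ('c \<Rightarrow> real) \<Rightarrow> 'c \<Rightarrow> nat \<Rightarrow> nat \<Rightarrow> (nat \<Rightarrow> 'c) set" where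
  "Omega_n \<iota> nv \<xi> m n = {w \<in> Omega \<iota> \<xi> m.
      imag_norm \<iota> nv m w \<ge> real CARD('f) powr (- real n) * vec_norm nv m w}"

definition lattice :: "('f::{finite,field} fls \<Rightarrow> 'c::field) \<Rightarrow> nat \<Rightarrow> (nat \<Rightarrow> 'c) \<Rightarrow> 'c set" where
  "lattice \<iota> m w = {(\<Sum>j<m. \<iota> (polyF (a j)) * w j) | a. True}"

text \<open>Exponential e_L(x) = x * prod_{0 <> lambda in L} (1 - x/lambda), as the limit of the
  (finite, since L is discrete) partial products over 0 < |lambda| <= n.\<close>
definition expL :: "('c::field \<Rightarrow> real) \<Rightarrow> 'c set \<Rightarrow> 'c \<Rightarrow> 'c" where
  "expL nv L x = (THE y. conv_nv nv
      (\<lambda>n. x * (\<Prod>l\<in>{l\<in>L. 0 < nv l \<and> nv l \<le> real n}. 1 - x / l)) y)"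

text \<open>Drinfeld module phi^L_a(Z) = aZ prod_{0 <> lambda in a^{-1}L/L} (1 - Z/e_L(lambda)),
  the product running over the nonzero cosets lambda + L with lambda in a^{-1}L.\<close>
definition drinfeld_phi :: "('f::{finite,field} fls \<Rightarrow> 'c::field) \<Rightarrow> ('c \<Rightarrow> real) \<Rightarrow> 'c set \<Rightarrow> 'f poly \<Rightarrow> 'c poly" where
  "drinfeld_phi \<iota> nv L a =
     smult (\<iota> (polyF a)) [:0, 1:] *
     (\<Prod>C\<in>{{l + \<mu> | \<mu>. \<mu> \<in> L} | l. \<iota> (polyF a) * l \<in> L \<and> l \<notin> L}.
        [:1, - inverse (expL nv L (SOME l. l \<in> C)):])"

text \<open>f_a(X) = X^N Delta'_a^{-1} phi_a(X^{-1}) - 1 with N = q^{(r-1) deg a}, written as the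
  polynomial sum_{i<=N} coeff(phi_a, N - i) X^i, scaled, minus 1.\<close>
definition f_poly :: "('f::{finite,field} fls \<Rightarrow> 'c::field) \<Rightarrow> ('c \<Rightarrow> real) \<Rightarrow> nat \<Rightarrow> (nat \<Rightarrow> 'c) \<Rightarrow> 'f poly \<Rightarrow> 'c poly" where
  "f_poly \<iota> nv r w a =
     (let \<phi> = drinfeld_phi \<iota> nv (lattice \<iota> (r - 1) w) a;
          N = CARD('f) ^ ((r - 1) * degree a)
      in smult (inverse (lead_coeff \<phi>)) (\<Sum>i\<le>N. monom (coeff \<phi> (N - i)) i) - 1)"

text \<open>Uniform (unconditional) convergence of prod_{a in I} (1 + F a x) on D: the finite
  partial products converge uniformly along the net of finite subsets of I.\<close>
definition prod_unif_conv :: "('c::field \<Rightarrow> real) \<Rightarrow> 'i set \<Rightarrow> ('i \<Rightarrow> 'x \<Rightarrow> 'c) \<Rightarrow> 'x set \<Rightarrow> bool" where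
  "prod_unif_conv nv I F D \<longleftrightarrow> (\<exists>P. \<forall>e>0. \<exists>S0. finite S0 \<and> S0 \<subseteq> I \<and>
      (\<forall>S. finite S \<and> S0 \<subseteq> S \<and> S \<subseteq> I \<longrightarrow>
        (\<forall>x\<in>D. nv ((\<Prod>a\<in>S. 1 + F a x) - P x) < e)))"

end

theory Submission
  imports Defs
begin

text \<open>
  For \<open>\<omega>'\<close> in \<open>\<Omega>\<^sub>n\<close> one has \<open>|\<omega>'| \<le> q^n |\<xi>|\<close>, and a nonzero lattice point
  \<open>\<lambda> = \<Sum> a_j \<omega>_j\<close> satisfies \<open>|\<lambda>| \<ge> q^(deg a_j - n) |\<omega>'|\<close> for every \<open>j\<close>. So the
  lattice points in a ball have coordinates of bounded degree, with a bound depending only on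
  \<open>n\<close> and \<open>|\<xi>|\<close>, and the exponential \<open>e\<close> of \<open>\<Lambda>'\<close> is bounded on the ball of radius
  \<open>|\<omega>'|\<close> by a constant \<open>M\<close> independent of \<open>\<omega>'\<close>.

  Up to a nonzero factor, \<open>\<phi>_a\<close> is \<open>\<Prod>(X - t)\<close> over the \<open>a\<close>-torsion \<open>T = e(a\<^sup>-\<^sup>1\<Lambda>')\<close>,
  an additive group of order \<open>N = q^((r-1) deg a)\<close> whose elements have \<open>|t| \<le> M\<close>. This
  product is an additive polynomial, so its nonzero coefficients sit at powers of the
  characteristic; hence \<open>f_a(u) = \<Sum>\<^bsub>i=1..N\<^esub> c_(N-i) u^i\<close> involves only \<open>i \<ge> N/2 > deg a / 2\<close>,
  with \<open>|c_(N-i)| \<le> M^i\<close>. For \<open>|u| M \<le> 1/2\<close> this gives \<open>|f_a(u)| \<le> 2^-(deg a div 2 + 1)\<close>,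
  uniformly in \<open>\<omega>'\<close>. As only finitely many \<open>a\<close> have bounded degree, the ultrametric
  inequality makes the product converge uniformly.
\<close>

section \<open>Additive polynomials\<close>

lemma poly_eqI_infinite:
  assumes "infinite (UNIV :: 'a::idom set)" "\<And>x. poly A x = poly (B :: 'a poly) x"
  shows "A = B"
proof (rule ccontr)
  assume "A \<noteq> B"
  hence "finite {x. poly (A - B) x = 0}" by (intro poly_roots_finite) simp
  moreover have "{x. poly (A - B) x = 0} = UNIV" using assms(2) by auto
  ultimately show False using assms(1) by simp
qed

lemma poly_altdef_le:
  fixes P :: "'a::comm_semiring_1 poly"
  assumes "degree P \<le> n"
  shows "poly P x = (\<Sum>j\<le>n. coeff P j * x ^ j)"
proof -
  have "poly P x = (\<Sum>j\<le>degree P. coeff P j * x ^ j)" by (rule poly_altdef)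
  also have "\<dots> = (\<Sum>j\<le>n. coeff P j * x ^ j)"
    by (rule sum.mono_neutral_left) (use assms in \<open>auto simp: coeff_eq_0\<close>)
  finally show ?thesis .
qed

lemma degree_prod_linear:
  assumes "finite A"
  shows "degree (\<Prod>a\<in>A. [:c a, 1::'a::idom:]) = card A"
proof -
  have "degree (\<Prod>a\<in>A. [:c a, 1::'a:]) = (\<Sum>a\<in>A. degree [:c a, 1::'a:])"
    by (rule degree_prod_eq_sum_degree) simp
  thus ?thesis by simp
qed

lemma coeff_prod_linear_card:
  assumes "finite A"
  shows "coeff (\<Prod>a\<in>A. [:c a, 1::'a::idom:]) (card A) = 1"
proof -
  have "lead_coeff (\<Prod>a\<in>A. [:c a, 1::'a:]) = (\<Prod>a\<in>A. lead_coeff [:c a, 1::'a:])"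
    by (rule lead_coeff_prod)
  thus ?thesis using degree_prod_linear[OF assms, of c] by simp
qed

lemma degree_diff_monic_lt:
  fixes A B :: "'a::comm_ring_1 poly"
  assumes "degree A = n" "degree B = n" "coeff A n = 1" "coeff B n = 1" "n > 0"
  shows "degree (A - B) < n"
proof -
  have "degree (A - B) \<le> n" using assms by (intro degree_diff_le) auto
  moreover have "coeff (A - B) n = 0" using assms by simp
  ultimately show ?thesis using assms(5)
    by (metis le_neq_implies_less leading_coeff_0_iff degree_0)
qed

definition additive_poly :: "'a::comm_semiring_1 poly \<Rightarrow> bool" where
  "additive_poly P \<longleftrightarrow> (\<forall>x y. poly P (x + y) = poly P x + poly P y)"

lemma additive_poly_coeff_0: "additive_poly P \<Longrightarrow> coeff P 0 = (0::'a::comm_ring_1)"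
  unfolding additive_poly_def by (metis add.right_neutral add_left_cancel poly_0_coeff_0)

locale perfect_char_field =
  fixes p :: nat
  assumes p_prime: "prime p" and of_nat_p: "of_nat p = (0 :: 'a::field)"
    and p_th_roots: "\<And>a::'a. \<exists>x. x ^ p = a"
    and infinite_UNIV: "infinite (UNIV :: 'a set)"
begin

lemma CHAR_eq_p: "CHAR('a) = p"
proof -
  have "CHAR('a) dvd p" using of_nat_p by (simp add: of_nat_eq_0_iff_char_dvd)
  moreover have "CHAR('a) \<noteq> 1" by simp
  ultimately show ?thesis using p_prime by (metis prime_nat_iff)
qed

lemma of_nat_eq_0_iff_p_dvd: "of_nat n = (0::'a) \<longleftrightarrow> p dvd n"
  using of_nat_eq_0_iff_char_dvd[where 'a='a] CHAR_eq_p by simp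

lemma p_ge_2: "p \<ge> 2" using p_prime by (simp add: prime_ge_2_nat)

lemma add_power_p: "(x + y) ^ p = x ^ p + (y::'a) ^ p"
proof -
  have "(x + y) ^ p = (\<Sum>k\<le>p. of_nat (p choose k) * x ^ k * y ^ (p - k))"
    by (rule binomial_ring)
  also have "\<dots> = (\<Sum>k\<in>{0, p}. of_nat (p choose k) * x ^ k * y ^ (p - k))"
  proof (rule sum.mono_neutral_right)
    show "\<forall>k\<in>{..p} - {0, p}. of_nat (p choose k) * x ^ k * y ^ (p - k) = 0"
    proof
      fix k assume "k \<in> {..p} - {0, p}"
      hence "p dvd (p choose k)" using p_prime by (intro dvd_choose_prime) auto
      thus "of_nat (p choose k) * x ^ k * y ^ (p - k) = 0" by (simp add: of_nat_eq_0_iff_p_dvd)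
    qed
  qed auto
  also have "\<dots> = x ^ p + y ^ p" using p_ge_2 by simp
  finally show ?thesis .
qed

text \<open>Translating the variable by \<open>y\<close> changes an additive polynomial by a constant, so its
  derivative is translation invariant, hence constant: all exponents \<open>j \<ge> 2\<close> that occur are
  divisible by \<open>p\<close>.\<close>

lemma pderiv_additive_poly_translate:
  fixes P :: "'a poly"
  assumes "additive_poly P"
  shows "poly (pderiv P) (x + y) = poly (pderiv P) x"
proof -
  have "pcompose P [:y, 1:] = P + [:poly P y:]"
    by (rule poly_eqI_infinite[OF infinite_UNIV])
      (use assms in \<open>simp add: additive_poly_def poly_pcompose add.commute\<close>)
  hence "pderiv (pcompose P [:y, 1:]) = pderiv (P + [:poly P y:])" by simp
  hence "pcompose (pderiv P) [:y, 1:] = pderiv P"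
    by (simp add: pderiv_pcompose pderiv_add pderiv_pCons)
  hence "poly (pcompose (pderiv P) [:y, 1:]) x = poly (pderiv P) x" by simp
  thus ?thesis by (simp add: poly_pcompose add.commute)
qed

lemma additive_poly_coeff_p_dvd:
  fixes P :: "'a poly"
  assumes add: "additive_poly P" and j: "j \<ge> 2" and c: "coeff P j \<noteq> 0"
  shows "p dvd j"
proof -
  have "poly (pderiv P) x = poly (pderiv P) 0" for x
    using pderiv_additive_poly_translate[OF add, of 0 x] by simp
  hence "pderiv P = [:poly (pderiv P) 0:]" by (intro poly_eqI_infinite[OF infinite_UNIV]) simp
  hence "coeff (pderiv P) (Suc (j - 2)) = 0" by (metis coeff_pCons_Suc coeff_0)
  moreover have "Suc (Suc (j - 2)) = j" using j by simp
  ultimately have "of_nat j * coeff P j = 0" unfolding coeff_pderiv by metis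
  hence "of_nat j = (0::'a)" using c by simp
  thus ?thesis by (simp add: of_nat_eq_0_iff_p_dvd)
qed

text \<open>The polynomial \<open>Q\<close> with \<open>P x = P'(0) x + Q (x^p)\<close> for additive \<open>P\<close>.\<close>

definition p_descent :: "'a poly \<Rightarrow> 'a poly" where
  "p_descent P = Poly (map (\<lambda>i. if i = 0 then 0 else coeff P (p * i)) [0..<Suc (degree P)])"

lemma coeff_p_descent: "coeff (p_descent P) i = (if i = 0 then 0 else coeff P (p * i))"
proof -
  have "i \<le> p * i" using p_ge_2 by simp
  hence "i > degree P \<Longrightarrow> coeff P (p * i) = 0" by (intro coeff_eq_0) (rule less_le_trans)
  thus ?thesis unfolding p_descent_def by (auto simp: nth_default_def simp del: upt_Suc)
qed

lemma degree_p_descent_less: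
  assumes "degree P > 0"
  shows "degree (p_descent P) < degree P"
proof -
  have "coeff (p_descent P) i = 0" if "i \<ge> degree P" for i
  proof (cases "i = 0")
    case False
    have "2 * i \<le> p * i" using p_ge_2 by simp
    hence "p * i > degree P" using that False assms by linarith
    thus ?thesis using False by (simp add: coeff_p_descent coeff_eq_0)
  qed (simp add: coeff_p_descent)
  hence "degree (p_descent P) < degree P \<or> p_descent P = 0"
    by (metis le_degree leading_coeff_0_iff not_le)
  thus ?thesis using assms by auto
qed

lemma additive_poly_p_descent_eq:
  assumes add: "additive_poly P" and deg: "degree P > 0"
  shows "poly P x = coeff P 1 * x + poly (p_descent P) (x ^ p)"
proof -
  define D where "D = degree P"
  define J where "J = (\<lambda>i. p * i) ` {1..D}"
  have pD: "D \<le> p * D" using p_ge_2 by simp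
  have "poly (p_descent P) (x ^ p) = (\<Sum>i\<le>D. coeff (p_descent P) i * (x ^ p) ^ i)"
    using degree_p_descent_less[OF deg] unfolding D_def by (intro poly_altdef_le) simp
  also have "\<dots> = (\<Sum>i\<in>{1..D}. coeff P (p * i) * x ^ (p * i))"
    by (rule sum.mono_neutral_cong_right) (auto simp: coeff_p_descent power_mult)
  also have "\<dots> = (\<Sum>j\<in>J. coeff P j * x ^ j)"
    unfolding J_def
    by (rule sum.reindex[symmetric, unfolded comp_def]) (use p_ge_2 in \<open>auto simp: inj_on_def\<close>)
  finally have descent: "poly (p_descent P) (x ^ p) = (\<Sum>j\<in>J. coeff P j * x ^ j)" .
  have outside: "coeff P j = 0" if "j \<le> p * D" "j \<notin> insert 1 J" for j
  proof (rule ccontr)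
    assume cj: "coeff P j \<noteq> 0"
    hence jD: "j \<le> D" unfolding D_def by (rule le_degree)
    have "j \<noteq> 0" using cj additive_poly_coeff_0[OF add] by metis
    hence "p dvd j" using additive_poly_coeff_p_dvd[OF add _ cj] that(2) by simp
    then obtain i where ji: "j = p * i" by auto
    have "i \<le> p * i" using p_ge_2 by simp
    hence "i \<in> {1..D}" using \<open>j \<noteq> 0\<close> ji jD by (cases i) auto
    thus False using that(2) ji unfolding J_def by auto
  qed
  have "poly P x = (\<Sum>j\<le>p * D. coeff P j * x ^ j)"
    using pD unfolding D_def by (intro poly_altdef_le) simp
  also have "\<dots> = (\<Sum>j\<in>insert 1 J. coeff P j * x ^ j)"
    by (rule sum.mono_neutral_right) (use outside pD deg in \<open>auto simp: J_def D_def\<close>)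
  also have "\<dots> = coeff P 1 * x + (\<Sum>j\<in>J. coeff P j * x ^ j)"
    by (subst sum.insert) (use p_ge_2 in \<open>auto simp: J_def\<close>)
  finally show ?thesis using descent by simp
qed

lemma additive_poly_p_descent:
  assumes add: "additive_poly P" and deg: "degree P > 0"
  shows "additive_poly (p_descent P)"
  unfolding additive_poly_def
proof (intro allI)
  fix a b :: 'a
  obtain x y where xy: "x ^ p = a" "y ^ p = b" using p_th_roots[of a] p_th_roots[of b] by blast
  have "poly (p_descent P) ((x + y) ^ p) = poly P (x + y) - coeff P 1 * (x + y)"
    using additive_poly_p_descent_eq[OF add deg, of "x + y"] by simp
  also have "\<dots> = poly (p_descent P) (x ^ p) + poly (p_descent P) (y ^ p)"
    using add additive_poly_p_descent_eq[OF add deg]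
    by (simp add: additive_poly_def algebra_simps)
  finally show "poly (p_descent P) (a + b) = poly (p_descent P) a + poly (p_descent P) b"
    using xy by (simp add: add_power_p)
qed

lemma additive_poly_coeff_p_power:
  fixes P :: "'a poly"
  shows "additive_poly P \<Longrightarrow> coeff P j \<noteq> 0 \<Longrightarrow> \<exists>k. j = p ^ k"
proof (induction "degree P" arbitrary: P j rule: less_induct)
  case less
  note add = less.prems(1)
  show ?case
  proof (cases "j \<le> 1")
    case True
    moreover have "j \<noteq> 0" using additive_poly_coeff_0[OF add] less.prems(2) by metis
    ultimately have "j = p ^ 0" by simp
    thus ?thesis by blast
  next
    case False
    hence deg: "degree P > 0" using less.prems(2) le_degree by fastforce
    have "p dvd j" using additive_poly_coeff_p_dvd[OF add _ less.prems(2)] False by simp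
    then obtain i where ji: "j = p * i" by auto
    have "coeff (p_descent P) i \<noteq> 0"
      using less.prems(2) ji False by (cases "i = 0") (auto simp: coeff_p_descent)
    then obtain k where "i = p ^ k"
      using less.hyps[OF degree_p_descent_less[OF deg] additive_poly_p_descent[OF add deg]] by blast
    hence "j = p ^ Suc k" using ji by simp
    thus ?thesis by blast
  qed
qed

end


locale finite_add_subgroup =
  fixes V :: "'a::field set"
  assumes finite_V: "finite V" and zero_in_V: "0 \<in> V" and diff_in_V: "\<And>x y. x \<in> V \<Longrightarrow> y \<in> V \<Longrightarrow> x - y \<in> V"
begin

definition subgroup_poly :: "'a poly" where "subgroup_poly = (\<Prod>v\<in>V. [:- v, 1:])"

lemma poly_subgroup_poly: "poly subgroup_poly x = (\<Prod>v\<in>V. x - v)"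
  unfolding subgroup_poly_def poly_prod by simp

lemma degree_subgroup_poly: "degree subgroup_poly = card V"
  unfolding subgroup_poly_def by (rule degree_prod_linear[OF finite_V])

lemma coeff_subgroup_poly_card: "coeff subgroup_poly (card V) = 1"
  unfolding subgroup_poly_def by (rule coeff_prod_linear_card[OF finite_V])

lemma card_V_pos: "card V > 0" using finite_V zero_in_V by (auto simp: card_gt_0_iff)

lemma prod_translate: "y \<in> V \<Longrightarrow> (\<Prod>v\<in>V. x - (v - y)) = (\<Prod>v\<in>V. x - v)"
proof -
  assume y: "y \<in> V"
  have inj: "inj_on (\<lambda>v. v - y) V" by (auto simp: inj_on_def)
  have img: "(\<lambda>v. v - y) ` V = V"
  proof (rule endo_inj_surj[OF finite_V _ inj])
    show "(\<lambda>v. v - y) ` V \<subseteq> V" using y diff_in_V by auto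
  qed
  have "(\<Prod>v\<in>V. x - (v - y)) = (\<Prod>v\<in>(\<lambda>v. v - y) ` V. x - v)"
    using prod.reindex[OF inj, of "\<lambda>v. x - v"] by simp
  thus ?thesis using img by simp
qed

text \<open>For fixed \<open>x\<close>, both \<open>P (z + x)\<close> and \<open>P z\<close> are monic of degree \<open>card V\<close> in \<open>z\<close>, so
  \<open>P (z + x) - P z - P x\<close> has smaller degree; it vanishes on \<open>V\<close>, hence identically.\<close>

lemma additive_subgroup_poly: "additive_poly subgroup_poly"
  unfolding additive_poly_def
proof (intro allI)
  fix x y
  define A :: "'a poly" where "A = (\<Prod>v\<in>V. [:x - v, 1:])"
  define Q where "Q = A - subgroup_poly - [:poly subgroup_poly x:]"
  have pA: "poly A z = (\<Prod>v\<in>V. z + x - v)" for z unfolding A_def poly_prod by (simp add: algebra_simps)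
  have "degree (A - subgroup_poly) < card V"
    unfolding A_def using degree_subgroup_poly coeff_subgroup_poly_card card_V_pos
    by (intro degree_diff_monic_lt degree_prod_linear coeff_prod_linear_card finite_V)
  hence dQ: "degree Q < card V"
    unfolding Q_def using card_V_pos by (intro le_less_trans[OF degree_diff_le_max]) simp
  have roots: "V \<subseteq> {z. poly Q z = 0}"
  proof
    fix z assume z: "z \<in> V"
    have "poly A z = (\<Prod>v\<in>V. x - (v - z))" unfolding pA by (simp add: algebra_simps)
    also have "\<dots> = poly subgroup_poly x" unfolding poly_subgroup_poly by (rule prod_translate[OF z])
    finally have "poly A z = poly subgroup_poly x" .
    moreover have "poly subgroup_poly z = 0"
      unfolding poly_subgroup_poly using z finite_V by (auto intro: prod_zero)
    ultimately show "z \<in> {z. poly Q z = 0}" unfolding Q_def by simp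
  qed
  have "Q = 0"
  proof (rule ccontr)
    assume "Q \<noteq> 0"
    hence "card {z. poly Q z = 0} \<le> degree Q" by (rule card_poly_roots_bound)
    moreover have "card V \<le> card {z. poly Q z = 0}"
      using roots poly_roots_finite[OF \<open>Q \<noteq> 0\<close>] by (rule card_mono[rotated])
    ultimately show False using dQ by simp
  qed
  hence "poly Q y = 0" by simp
  thus "poly subgroup_poly (x + y) = poly subgroup_poly x + poly subgroup_poly y"
    unfolding Q_def using pA[of y] poly_subgroup_poly by (simp add: algebra_simps)
qed

end

section \<open>Polynomials over \<open>\<bbbF>\<^sub>q\<close> and the absolute value of \<open>F\<^sub>\<infinity>\<close>\<close>

lemma fls_const_sum: "fls_const (sum g A) = (\<Sum>a\<in>A. fls_const (g a))"
  by (induction A rule: infinite_finite_induct) (auto simp: fls_plus_const[symmetric])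

lemma polyF_alt: "polyF p = poly (map_poly fls_const p) tF"
proof -
  have d: "degree (map_poly fls_const p) = degree p"
    by (rule degree_map_poly) (simp add: fls_const_nonzero)
  show ?thesis unfolding polyF_def poly_altdef d
    by (simp add: coeff_map_poly)
qed

lemma map_fls_add: "map_poly fls_const (p + q) = map_poly fls_const p + map_poly fls_const q"
  by (rule poly_eqI) (simp add: coeff_map_poly fls_plus_const)

lemma map_fls_mult: "map_poly fls_const (p * q) = map_poly fls_const p * map_poly fls_const (q :: 'a::field poly)"
  by (rule poly_eqI) (simp add: coeff_map_poly coeff_mult fls_const_sum)

lemma polyF_add: "polyF (p + q) = polyF p + polyF q"
  by (simp add: polyF_alt map_fls_add)

lemma polyF_mult: "polyF (p * q) = polyF p * polyF (q :: 'a::field poly)"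
  by (simp add: polyF_alt map_fls_mult)

lemma polyF_0[simp]: "polyF 0 = 0" by (simp add: polyF_def)

lemma polyF_minus: "polyF (- p) = - polyF (p :: 'a::field poly)"
  using polyF_add[of p "-p"] by (simp add: eq_neg_iff_add_eq_0 add.commute)

lemma polyF_diff: "polyF (p - q) = polyF p - polyF (q :: 'a::field poly)"
  using polyF_add[of p "-q"] polyF_minus[of q] by simp

lemma polyF_nth: "fls_nth (polyF p) k = (if k \<le> 0 then coeff p (nat (-k)) else (0::'a::field))"
proof -
  have e: "fls_nth (polyF p) k = (\<Sum>i\<le>degree p. (if k = - int i then coeff p i else 0))"
    unfolding polyF_def tF_def fls_nth_sum by (intro sum.cong refl) simp
  show ?thesis
  proof (cases "k \<le> 0")
    case True
    have "(\<Sum>i\<le>degree p. (if k = - int i then coeff p i else 0)) = (\<Sum>i\<le>degree p. (if i = nat (-k) then coeff p i else 0))"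
      using True by (intro sum.cong refl) auto
    also have "\<dots> = (if nat (-k) \<in> {..degree p} then coeff p (nat (-k)) else 0)"
      by (rule sum.delta) simp
    also have "\<dots> = coeff p (nat (-k))" by (auto simp: coeff_eq_0)
    finally show ?thesis using e True by simp
  next
    case False
    have "(\<Sum>i\<le>degree p. (if k = - int i then coeff p i else 0)) = 0"
      using False by (intro sum.neutral) auto
    thus ?thesis using e False by simp
  qed
qed

lemma polyF_eq_0_iff[simp]: "polyF p = 0 \<longleftrightarrow> p = (0 :: 'a::field poly)"
proof
  assume "polyF p = 0"
  hence "coeff p i = 0" for i using polyF_nth[of p "- int i"] by simp
  thus "p = 0" by (simp add: poly_eqI)
qed simp

lemma polyF_inj: "polyF p = polyF q \<longleftrightarrow> p = (q :: 'a::field poly)"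
  using polyF_eq_0_iff[of "p - q"] polyF_diff[of p q] by auto

lemma subdegree_polyF: "p \<noteq> 0 \<Longrightarrow> fls_subdegree (polyF p) = - int (degree (p::'a::field poly))"
  by (rule fls_subdegree_eqI) (auto simp: polyF_nth coeff_eq_0)

lemma absF_0_iff: "absF f = 0 \<longleftrightarrow> f = (0 :: 'f::{finite,field} fls)"
  by (simp add: absF_def)

lemma absF_mult: "absF (x * y) = absF x * absF (y :: 'f::{finite,field} fls)"
proof (cases "x = 0 \<or> y = 0")
  case True thus ?thesis by (auto simp: absF_def)
next
  case False
  hence "x * y \<noteq> 0" by simp
  hence "absF (x * y) = real CARD('f) powr (- real_of_int (fls_subdegree x) + - real_of_int (fls_subdegree y))"
    using False unfolding absF_def by (simp add: algebra_simps)
  also have "\<dots> = real CARD('f) powr (- real_of_int (fls_subdegree x)) * real CARD('f) powr (- real_of_int (fls_subdegree y))"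
    by (rule powr_add)
  also have "\<dots> = absF x * absF y" using False unfolding absF_def by simp
  finally show ?thesis .
qed

lemma absF_polyF: "p \<noteq> 0 \<Longrightarrow> absF (polyF p) = real CARD('f) ^ degree (p :: 'f::{finite,field} poly)"
  by (simp add: absF_def subdegree_polyF powr_realpow)

lemma absF_1[simp]: "absF (1 :: 'f::{finite,field} fls) = 1"
  by (simp add: absF_def)

lemma absF_inverse: "absF (inverse x) = inverse (absF (x :: 'f::{finite,field} fls))"
proof (cases "x = 0")
  case False
  have "absF x * absF (inverse x) = 1" using False by (simp flip: absF_mult)
  thus ?thesis by (metis inverse_unique)
qed (simp add: absF_def)

lemma absF_divide: "absF (x / y) = absF x / absF (y :: 'f::{finite,field} fls)"
  by (simp add: divide_inverse absF_mult absF_inverse)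

lemma absF_nonneg: "absF x \<ge> 0"
  by (simp add: absF_def)

lemma absF_tF_power: "absF (tF ^ k :: 'f::{finite,field} fls) = real CARD('f) ^ k"
  by (simp add: absF_def tF_def powr_realpow)

lemma MAX_absF_divide_max:
  fixes h :: "nat \<Rightarrow> 'f::{finite,field} fls"
  assumes "j0 < m" "absF (h j0) = (MAX j\<in>{..<m}. absF (h j))" "h j0 \<noteq> 0"
  shows "(MAX j\<in>{..<m}. absF (h j / h j0)) = 1"
proof (rule Max_eqI)
  have "absF (h j0) > 0" using assms(3) by (simp add: absF_def)
  moreover have "absF (h k) \<le> absF (h j0)" if "k < m" for k
    unfolding assms(2) using that by (intro Max_ge) auto
  ultimately show "y \<le> 1" if "y \<in> (\<lambda>j. absF (h j / h j0)) ` {..<m}" for y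
    using that by (auto simp: absF_divide)
  show "1 \<in> (\<lambda>j. absF (h j / h j0)) ` {..<m}"
    using assms by (auto intro!: image_eqI[of _ _ j0])
qed simp

lemma CARD_ge_2: "real CARD('f::{finite,field}) \<ge> 2"
proof -
  have "card {0::'f, 1} \<le> CARD('f)" by (rule card_mono) auto
  thus ?thesis by simp
qed

definition polys_deg_lt :: "nat \<Rightarrow> 'a::zero poly set" where "polys_deg_lt d = {p. \<forall>i\<ge>d. coeff p i = 0}"

lemma polys_deg_lt_iff: "p \<in> polys_deg_lt d \<longleftrightarrow> p = 0 \<or> degree p < d"
proof
  assume "p \<in> polys_deg_lt d"
  hence c: "\<And>i. i \<ge> d \<Longrightarrow> coeff p i = 0" by (simp add: polys_deg_lt_def)
  show "p = 0 \<or> degree p < d"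
  proof (rule ccontr)
    assume "\<not> (p = 0 \<or> degree p < d)"
    hence "p \<noteq> 0" "degree p \<ge> d" by auto
    hence "coeff p (degree p) = 0" using c by blast
    thus False using \<open>p \<noteq> 0\<close> by simp
  qed
next
  assume "p = 0 \<or> degree p < d"
  thus "p \<in> polys_deg_lt d" unfolding polys_deg_lt_def by (auto intro: coeff_eq_0)
qed

lemma bij_betw_coeffs_polys_deg_lt:
  "bij_betw (\<lambda>p. restrict (coeff p) {..<d}) (polys_deg_lt d) (PiE {..<d} (\<lambda>_. (UNIV::'a::zero set)))"
proof (rule bij_betwI')
  fix p q :: "'a poly" assume "p \<in> polys_deg_lt d" "q \<in> polys_deg_lt d"
  hence "coeff p i = coeff q i" if "restrict (coeff p) {..<d} = restrict (coeff q) {..<d}" for i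
    using fun_cong[OF that, of i] by (cases "i < d") (auto simp: polys_deg_lt_def)
  thus "(restrict (coeff p) {..<d} = restrict (coeff q) {..<d}) = (p = q)"
    by (auto intro: poly_eqI)
next
  fix f assume f: "f \<in> PiE {..<d} (\<lambda>_. (UNIV::'a set))"
  define p where "p = Poly (map f [0..<d])"
  have c: "coeff p i = (if i < d then f i else 0)" for i
    unfolding p_def by (simp add: nth_default_def)
  have "restrict (coeff p) {..<d} = f"
    using f by (auto simp: c PiE_def extensional_def)
  thus "\<exists>p\<in>polys_deg_lt d. f = restrict (coeff p) {..<d}"
    by (intro bexI[of _ p]) (auto simp: polys_deg_lt_def c)
qed auto

lemma card_polys_deg_lt: "card (polys_deg_lt d :: 'a::{zero,finite} poly set) = CARD('a) ^ d"
  using bij_betw_same_card[OF bij_betw_coeffs_polys_deg_lt[of d]] by (simp add: card_PiE)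

lemma finite_polys_deg_lt: "finite (polys_deg_lt d :: 'a::{zero,finite} poly set)"
  using bij_betw_finite[OF bij_betw_coeffs_polys_deg_lt[of d]] by (auto intro!: finite_PiE)

lemma finite_degree_less: "finite {a :: 'a::{zero,finite} poly. degree a < d}"
  by (rule finite_subset[OF _ finite_polys_deg_lt[of d]]) (auto simp: polys_deg_lt_iff)

definition poly_vecs_deg_lt :: "nat \<Rightarrow> nat \<Rightarrow> (nat \<Rightarrow> 'a::zero poly) set" where
  "poly_vecs_deg_lt m d = {a. \<forall>j. (j < m \<longrightarrow> a j \<in> polys_deg_lt d) \<and> (j \<ge> m \<longrightarrow> a j = 0)}"

lemma bij_betw_restrict_poly_vecs: "bij_betw (\<lambda>a. restrict a {..<m}) (poly_vecs_deg_lt m d) (PiE {..<m} (\<lambda>_. polys_deg_lt d))"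
  unfolding bij_betw_def
proof
  show "inj_on (\<lambda>a. restrict a {..<m}) (poly_vecs_deg_lt m d)"
  proof (rule inj_onI)
    fix a b assume ab: "a \<in> poly_vecs_deg_lt m d" "b \<in> poly_vecs_deg_lt m d" "restrict a {..<m} = restrict b {..<m}"
    show "a = b"
    proof
      fix j show "a j = b j"
      proof (cases "j < m")
        case True thus ?thesis using fun_cong[OF ab(3), of j] by simp
      next
        case False thus ?thesis using ab(1,2) by (simp add: poly_vecs_deg_lt_def)
      qed
    qed
  qed
  show "(\<lambda>a. restrict a {..<m}) ` poly_vecs_deg_lt m d = PiE {..<m} (\<lambda>_. polys_deg_lt d)"
  proof (intro equalityI subsetI)
    fix g assume "g \<in> (\<lambda>a. restrict a {..<m}) ` poly_vecs_deg_lt m d"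
    then obtain a where a: "a \<in> poly_vecs_deg_lt m d" "g = restrict a {..<m}" by blast
    thus "g \<in> PiE {..<m} (\<lambda>_. polys_deg_lt d)" by (simp add: restrict_PiE_iff poly_vecs_deg_lt_def)
  next
    fix g assume g: "g \<in> PiE {..<m} (\<lambda>_. polys_deg_lt d)"
    define a where "a = (\<lambda>j. if j < m then g j else 0)"
    have "a \<in> poly_vecs_deg_lt m d" using g by (auto simp: a_def poly_vecs_deg_lt_def polys_deg_lt_def)
    moreover have "restrict a {..<m} = g" using g by (auto simp: a_def PiE_def extensional_def)
    ultimately show "g \<in> (\<lambda>a. restrict a {..<m}) ` poly_vecs_deg_lt m d" by blast
  qed
qed

lemma card_poly_vecs_deg_lt: "card (poly_vecs_deg_lt m d :: (nat \<Rightarrow> 'a::{zero,finite} poly) set) = CARD('a) ^ (d * m)"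
  using bij_betw_same_card[OF bij_betw_restrict_poly_vecs[of m d, where 'a='a]] card_polys_deg_lt[of d, where 'a='a] by (simp add: card_PiE power_mult)

lemma finite_poly_vecs_deg_lt: "finite (poly_vecs_deg_lt m d :: (nat \<Rightarrow> 'a::{zero,finite} poly) set)"
  using bij_betw_finite[OF bij_betw_restrict_poly_vecs[of m d]] by (auto intro!: finite_PiE finite_polys_deg_lt)

section \<open>The valued field \<open>\<complex>\<^sub>\<infinity>\<close>\<close>

locale Cinf =
  fixes \<iota> :: "'f::{finite,field} fls \<Rightarrow> 'c::field" and nv :: "'c \<Rightarrow> real"
  assumes is_Cinf: "is_Cinf \<iota> nv"
begin

lemma iota_add: "\<iota> (x + y) = \<iota> x + \<iota> y" using is_Cinf unfolding is_Cinf_def by blast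
lemma iota_mult: "\<iota> (x * y) = \<iota> x * \<iota> y" using is_Cinf unfolding is_Cinf_def by blast
lemma iota_1[simp]: "\<iota> 1 = 1" using is_Cinf unfolding is_Cinf_def by blast
lemma nv_nonneg[simp]: "nv x \<ge> 0" using is_Cinf unfolding is_Cinf_def by blast
lemma nv_eq_0[simp]: "nv x = 0 \<longleftrightarrow> x = 0" using is_Cinf unfolding is_Cinf_def by blast
lemma nv_mult: "nv (x * y) = nv x * nv y" using is_Cinf unfolding is_Cinf_def by blast
lemma nv_add_le_max: "nv (x + y) \<le> max (nv x) (nv y)" using is_Cinf unfolding is_Cinf_def by blast
lemma nv_iota: "nv (\<iota> f) = absF f" using is_Cinf unfolding is_Cinf_def by blast
lemma nv_Cauchy_convergent: "(\<forall>e>0. \<exists>N. \<forall>m\<ge>N. \<forall>n\<ge>N. nv (s m - s n) < e) \<Longrightarrow> (\<exists>L. conv_nv nv s L)"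
  using is_Cinf unfolding is_Cinf_def by blast
lemma alg_closed: "degree (p::'c poly) > 0 \<Longrightarrow> \<exists>x. poly p x = 0"
  using is_Cinf unfolding is_Cinf_def by blast

lemma iota_0[simp]: "\<iota> 0 = 0"
proof -
  have "\<iota> 0 = \<iota> 0 + \<iota> 0" using iota_add[of 0 0] by simp
  thus ?thesis by (metis add_cancel_right_right)
qed

lemma iota_minus: "\<iota> (- x) = - \<iota> x"
proof -
  have "\<iota> (x + - x) = 0" by simp
  thus ?thesis unfolding iota_add by (simp add: eq_neg_iff_add_eq_0 add.commute)
qed

lemma iota_diff: "\<iota> (x - y) = \<iota> x - \<iota> y"
  using iota_add[of x "-y"] iota_minus[of y] by simp

lemma iota_eq_0_iff[simp]: "\<iota> x = 0 \<longleftrightarrow> x = 0"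
  using nv_iota[of x] absF_0_iff[of x] nv_eq_0[of "\<iota> x"] by auto

lemma iota_inverse: "\<iota> (inverse x) = inverse (\<iota> x)"
proof (cases "x = 0")
  case False
  have "\<iota> (x * inverse x) = 1" using False by simp
  hence "\<iota> x * \<iota> (inverse x) = 1" by (simp add: iota_mult)
  thus ?thesis by (metis inverse_unique)
qed simp

lemma iota_divide: "\<iota> (x / y) = \<iota> x / \<iota> y"
  by (simp add: divide_inverse iota_mult iota_inverse)

lemma nv_0[simp]: "nv 0 = 0" by simp

lemma nv_1[simp]: "nv 1 = 1"
proof -
  have "nv 1 = nv 1 * nv 1" using nv_mult[of 1 1] by simp
  moreover have "nv 1 \<noteq> 0" by simp
  ultimately show ?thesis by (metis mult_cancel_left1)
qed

lemma nv_minus1[simp]: "nv (-1) = 1"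
proof -
  have m: "(-1::'c) * -1 = 1" by simp
  have "nv (-1) * nv (-1) = 1" by (metis m nv_mult nv_1)
  hence "(nv (-1) - 1) * (nv (-1) + 1) = 0" by (simp add: algebra_simps)
  moreover have "nv (-1) + 1 \<noteq> 0" using nv_nonneg[of "-1"] by linarith
  ultimately show ?thesis by simp
qed

lemma nv_minus[simp]: "nv (- x) = nv x"
  using nv_mult[of "-1" x] by simp

lemma nv_diff_sym: "nv (x - y) = nv (y - x)"
  by (metis minus_diff_eq nv_minus)

lemma nv_power: "nv (x ^ k) = nv x ^ k"
  by (induction k) (auto simp: nv_mult)

lemma nv_inverse: "nv (inverse x) = inverse (nv x)"
proof (cases "x = 0")
  case False
  have "nv x * nv (inverse x) = 1" using False by (simp flip: nv_mult)
  thus ?thesis by (metis inverse_unique)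
qed simp

lemma nv_divide: "nv (x / y) = nv x / nv y"
  by (simp add: divide_inverse nv_mult nv_inverse)

lemma nv_prod: "nv (prod g A) = (\<Prod>a\<in>A. nv (g a))"
  by (induction A rule: infinite_finite_induct) (auto simp: nv_mult)

lemma nv_add_le: "nv x \<le> B \<Longrightarrow> nv y \<le> B \<Longrightarrow> nv (x + y) \<le> B"
  using nv_add_le_max[of x y] by linarith

lemma nv_diff_le: "nv x \<le> B \<Longrightarrow> nv y \<le> B \<Longrightarrow> nv (x - y) \<le> B"
  using nv_add_le[of x B "-y"] by simp

lemma nv_sum_le: "(\<And>a. a \<in> A \<Longrightarrow> nv (g a) \<le> B) \<Longrightarrow> B \<ge> 0 \<Longrightarrow> nv (sum g A) \<le> B"
proof (induction A rule: infinite_finite_induct)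
  case (insert x F)
  thus ?case by (simp add: nv_add_le)
qed auto

lemma nv_add_dominant: "nv y < nv x \<Longrightarrow> nv (x + y) = nv x"
proof -
  assume a: "nv y < nv x"
  have "nv (x + y) \<le> nv x" using nv_add_le_max[of x y] a by linarith
  moreover have "nv x \<le> max (nv (x + y)) (nv (-y))" using nv_add_le_max[of "x+y" "-y"] by simp
  ultimately show ?thesis using a by auto
qed

lemma nv_diff_ge: "nv x - nv y \<le> nv (x - y)"
proof -
  have "nv x \<le> max (nv (x - y)) (nv y)" using nv_add_le_max[of "x - y" y] by simp
  hence "nv x \<le> nv (x - y) \<or> nv x \<le> nv y" by (simp add: le_max_iff_disj)
  moreover have "0 \<le> nv (x - y)" "0 \<le> nv y" by simp_all
  ultimately show ?thesis by (smt (verit))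
qed

lemma nv_abs_diff: "\<bar>nv x - nv y\<bar> \<le> nv (x - y)"
  using nv_diff_ge[of x y] nv_diff_ge[of y x] nv_diff_sym[of x y] by linarith

lemma conv_nv_unique: "conv_nv nv s A \<Longrightarrow> conv_nv nv s B \<Longrightarrow> A = B"
proof -
  assume a: "conv_nv nv s A" "conv_nv nv s B"
  have "(\<lambda>n. max (nv (s n - A)) (nv (s n - B))) \<longlonglongrightarrow> max 0 0"
    using a unfolding conv_nv_def by (intro tendsto_max)
  moreover have "\<And>n. nv (A - B) \<le> max (nv (s n - A)) (nv (s n - B))"
  proof -
    fix n
    have "A - B = (s n - B) + (- (s n - A))" by simp
    thus "nv (A - B) \<le> max (nv (s n - A)) (nv (s n - B))"
      using nv_add_le_max[of "s n - B" "- (s n - A)"] nv_minus[of "s n - A"] by (metis max.commute)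
  qed
  ultimately have "nv (A - B) \<le> 0"
    by (intro LIMSEQ_le_const) (auto simp: max_def)
  thus ?thesis using nv_nonneg[of "A - B"] by simp
qed

lemma conv_nv_add: "conv_nv nv s A \<Longrightarrow> conv_nv nv t B \<Longrightarrow> conv_nv nv (\<lambda>n. s n + t n) (A + B)"
proof -
  assume a: "conv_nv nv s A" "conv_nv nv t B"
  have lim: "(\<lambda>n. max (nv (s n - A)) (nv (t n - B))) \<longlonglongrightarrow> max 0 0"
    using a unfolding conv_nv_def by (intro tendsto_max)
  have le: "nv (s n + t n - (A + B)) \<le> max (nv (s n - A)) (nv (t n - B))" for n
  proof -
    have "s n + t n - (A + B) = (s n - A) + (t n - B)" by simp
    thus ?thesis by (simp only: nv_add_le_max)
  qed
  show ?thesis unfolding conv_nv_def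
  proof (rule tendsto_sandwich[of "\<lambda>_. 0" _ _ "\<lambda>n. max (nv (s n - A)) (nv (t n - B))"])
    show "\<forall>\<^sub>F n in sequentially. 0 \<le> nv (s n + t n - (A + B))" by simp
    show "\<forall>\<^sub>F n in sequentially. nv (s n + t n - (A + B)) \<le> max (nv (s n - A)) (nv (t n - B))"
      using le by simp
    show "(\<lambda>_. 0::real) \<longlonglongrightarrow> 0" by simp
    show "(\<lambda>n. max (nv (s n - A)) (nv (t n - B))) \<longlonglongrightarrow> 0" using lim by simp
  qed
qed

lemma conv_nv_eventually_eq:
  assumes a: "conv_nv nv s A" and b: "\<And>n. n \<ge> N \<Longrightarrow> s n = t n"
  shows "conv_nv nv t A"
proof -
  have "(\<lambda>n. nv (s (n + N) - A)) \<longlonglongrightarrow> 0"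
    using a unfolding conv_nv_def by (rule LIMSEQ_ignore_initial_segment)
  moreover have "(\<lambda>n. nv (s (n + N) - A)) = (\<lambda>n. nv (t (n + N) - A))"
    using b by simp
  ultimately have "(\<lambda>n. nv (t (n + N) - A)) \<longlonglongrightarrow> 0" by simp
  thus ?thesis unfolding conv_nv_def by (rule LIMSEQ_offset)
qed

lemma nv_telescope_le:
  assumes "B \<ge> 0" and d: "\<And>k. n \<le> k \<Longrightarrow> nv (s (Suc k) - s k) \<le> B"
  shows "nv (s (n + j) - s n) \<le> B"
proof (induction j)
  case 0 thus ?case using assms(1) by simp
next
  case (Suc j)
  have "s (n + Suc j) - s n = (s (Suc (n + j)) - s (n + j)) + (s (n + j) - s n)" by simp
  moreover have "nv (s (Suc (n + j)) - s (n + j)) \<le> B" using d[of "n + j"] by simp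
  ultimately show ?case using Suc.IH by (simp only: nv_add_le)
qed

lemma conv_nv_of_small_steps:
  assumes "\<And>e. e > 0 \<Longrightarrow> \<exists>N. \<forall>k\<ge>N. nv (s (Suc k) - s k) < e"
  shows "\<exists>L. conv_nv nv s L"
proof (rule nv_Cauchy_convergent, intro allI impI)
  fix e :: real assume e: "e > 0"
  then obtain N where N: "\<forall>k\<ge>N. nv (s (Suc k) - s k) < e/2" using assms[of "e/2"] by auto
  have *: "nv (s (b + j) - s b) \<le> e/2" if "b \<ge> N" for b j
  proof (rule nv_telescope_le)
    show "0 \<le> e/2" using e by simp
    fix k assume "b \<le> k" thus "nv (s (Suc k) - s k) \<le> e / 2" using N that by (simp add: less_imp_le)
  qed
  have "nv (s m - s n) < e" if "m \<ge> N" "n \<ge> N" for m n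
  proof (cases "m \<ge> n")
    case True
    then obtain j where "m = n + j" using le_Suc_ex by blast
    thus ?thesis using *[of n j] that e by simp
  next
    case False
    then obtain j where j: "n = m + j" using le_Suc_ex[of m n] by auto
    have "nv (s m - s n) = nv (s n - s m)" by (rule nv_diff_sym)
    thus ?thesis using *[of m j] j that e by simp
  qed
  thus "\<exists>N. \<forall>m\<ge>N. \<forall>n\<ge>N. nv (s m - s n) < e" by blast
qed

lemma nv_prod_one_plus_minus_one_le:
  assumes "finite A" "\<And>a. a \<in> A \<Longrightarrow> nv (z a) \<le> B" "B \<le> 1" "B \<ge> 0"
  shows "nv ((\<Prod>a\<in>A. 1 + z a) - 1) \<le> B"
  using assms
proof (induction A rule: finite_induct)
  case empty thus ?case by simp
next
  case (insert x F)
  have zx: "nv (z x) \<le> B" using insert.prems(1) by simp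
  have IH: "nv ((\<Prod>a\<in>F. 1 + z a) - 1) \<le> B"
    using insert.IH insert.prems by simp
  have nv1: "nv (1 + z x) \<le> 1" using zx insert.prems(2) by (intro nv_add_le) simp_all
  have eq: "(\<Prod>a\<in>insert x F. 1 + z a) - 1 = (1 + z x) * ((\<Prod>a\<in>F. 1 + z a) - 1) + z x"
    using insert(1,2) by (simp add: algebra_simps)
  have "nv ((1 + z x) * ((\<Prod>a\<in>F. 1 + z a) - 1)) \<le> 1 * B"
    unfolding nv_mult by (rule mult_mono) (use nv1 IH insert.prems in simp_all)
  thus ?case unfolding eq using zx by (intro nv_add_le) simp_all
qed

lemma nv_prod_one_plus_eq_one:
  assumes a: "\<And>a. a \<in> A \<Longrightarrow> nv (z a) < 1"
  shows "nv (\<Prod>a\<in>A. 1 + z a) = 1"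
proof -
  have "nv (1 + z a) = 1" if "a \<in> A" for a
    using nv_add_dominant[of "z a" 1] a[OF that] by simp
  thus ?thesis unfolding nv_prod by simp
qed

lemma nv_coeff_prod_linear_le:
  assumes "finite T" "\<And>t. t \<in> T \<Longrightarrow> nv t \<le> M" "M \<ge> 0"
  shows "j \<le> card T \<Longrightarrow> nv (coeff (\<Prod>t\<in>T. [:- t, 1:]) j) \<le> M ^ (card T - j)"
  using assms
proof (induction T arbitrary: j rule: finite_induct)
  case empty
  thus ?case by simp
next
  case (insert t F)
  define Q where "Q = (\<Prod>t\<in>F. [:- t, 1:])"
  have dQ: "degree Q = card F" unfolding Q_def by (rule degree_prod_linear[OF insert(1)])
  have IH: "\<And>i. i \<le> card F \<Longrightarrow> nv (coeff Q i) \<le> M ^ (card F - i)"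
    unfolding Q_def using insert by auto
  have nt: "nv t \<le> M" using insert.prems by simp
  have eq: "(\<Prod>t\<in>insert t F. [:- t, 1:]) = [:- t, 1:] * Q" unfolding Q_def using insert(1,2) by simp
  have cF: "card (insert t F) = Suc (card F)" using insert(1,2) by simp
  have b2: "nv (t * coeff Q i) \<le> M ^ (Suc (card F) - i)" for i
  proof (cases "i \<le> card F")
    case True
    have "nv (t * coeff Q i) \<le> M * M ^ (card F - i)"
      unfolding nv_mult by (rule mult_mono) (use nt IH[OF True] \<open>M \<ge> 0\<close> in auto)
    also have "\<dots> = M ^ (Suc (card F) - i)" using True by (simp add: Suc_diff_le)
    finally show ?thesis .
  next
    case False
    hence "coeff Q i = 0" using dQ by (intro coeff_eq_0) simp
    thus ?thesis using \<open>M \<ge> 0\<close> by simp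
  qed
  show ?case
  proof (cases j)
    case 0
    have "coeff ([:- t, 1:] * Q) 0 = - t * coeff Q 0" by simp
    hence "nv (coeff ([:- t, 1:] * Q) 0) \<le> M ^ (Suc (card F) - 0)" using b2[of 0] by (simp add: nv_mult)
    thus ?thesis using 0 eq cF by simp
  next
    case (Suc i)
    have ij: "i \<le> card F" using insert.prems(1) Suc cF by simp
    have "coeff ([:- t, 1:] * Q) (Suc i) = - t * coeff Q (Suc i) + coeff Q i" by simp
    moreover have "nv (- t * coeff Q (Suc i)) \<le> M ^ (card F - i)"
      using b2[of "Suc i"] by (simp add: nv_mult)
    moreover have "nv (coeff Q i) \<le> M ^ (card F - i)" using IH[OF ij] .
    ultimately have "nv (coeff ([:- t, 1:] * Q) (Suc i)) \<le> M ^ (card F - i)"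
      by (simp add: nv_diff_le)
    thus ?thesis using Suc eq cF by simp
  qed
qed

lemma iota_of_nat: "\<iota> (of_nat k) = of_nat k"
  by (induction k) (simp_all add: iota_add)

lemma exists_power_root:
  assumes "n > 0"
  shows "\<exists>x. x ^ n = (a::'c)"
proof -
  have "degree (monom 1 n + [:-a:]) = degree (monom (1::'c) n)"
    using assms by (intro degree_add_eq_left) (simp add: degree_monom_eq)
  hence "degree (monom 1 n + [:-a:]) > 0" using assms by (simp add: degree_monom_eq)
  then obtain x where "poly (monom 1 n + [:-a:]) x = 0" using alg_closed by blast
  thus ?thesis by (auto simp: poly_monom)
qed

lemma infinite_UNIV_Cinf: "infinite (UNIV :: 'c set)"
proof
  have "inj (\<lambda>k::nat. \<iota> (tF ^ k))"
  proof (rule injI)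
    fix k l :: nat assume "\<iota> (tF ^ k) = \<iota> (tF ^ l)"
    hence "absF (tF ^ k :: 'f fls) = absF (tF ^ l :: 'f fls)" using nv_iota by metis
    thus "k = l" using CARD_ge_2[where 'f='f] by (simp add: absF_tF_power power_inject_exp)
  qed
  moreover assume "finite (UNIV :: 'c set)"
  hence "finite (range (\<lambda>k::nat. \<iota> (tF ^ k)))" by (rule finite_subset[rotated]) simp
  ultimately show False by (simp add: finite_image_iff)
qed

lemma perfect_char_field_Cinf: "perfect_char_field TYPE('c) CHAR('f)"
proof
  have "CHAR('f) > 0" by (rule finite_imp_CHAR_pos) simp
  thus "prime CHAR('f)" by (rule prime_CHAR_semidom)
  show "\<exists>x. x ^ CHAR('f) = a" for a :: 'c by (rule exists_power_root) fact
  have "\<iota> (of_nat CHAR('f)) = 0" using of_nat_CHAR[where 'a="'f fls"] by simp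
  thus "of_nat CHAR('f) = (0::'c)" by (simp add: iota_of_nat)
qed (rule infinite_UNIV_Cinf)

lemma additive_poly_coeff_CHAR_power:
  "additive_poly (P :: 'c poly) \<Longrightarrow> coeff P j \<noteq> 0 \<Longrightarrow> \<exists>k. j = CHAR('f) ^ k"
  using perfect_char_field.additive_poly_coeff_p_power[OF perfect_char_field_Cinf] by blast

lemma CHAR_ge_2: "CHAR('f) \<ge> 2"
  using perfect_char_field.p_ge_2[OF perfect_char_field_Cinf] .

lemma nv_prod_one_plus_diff_le:
  assumes "finite S" "S0 \<subseteq> S" "\<And>a. a \<in> S0 \<Longrightarrow> nv (z a) < 1"
    "\<And>a. a \<in> S - S0 \<Longrightarrow> nv (z a) \<le> b" "0 \<le> b" "b \<le> 1"
  shows "nv ((\<Prod>a\<in>S. 1 + z a) - (\<Prod>a\<in>S0. 1 + z a)) \<le> b"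
proof -
  have "(\<Prod>a\<in>S. 1 + z a) = (\<Prod>a\<in>S - S0. 1 + z a) * (\<Prod>a\<in>S0. 1 + z a)"
    by (rule prod.subset_diff[OF assms(2,1)])
  hence "(\<Prod>a\<in>S. 1 + z a) - (\<Prod>a\<in>S0. 1 + z a)
      = (\<Prod>a\<in>S0. 1 + z a) * ((\<Prod>a\<in>S - S0. 1 + z a) - 1)"
    by (simp add: algebra_simps)
  moreover have "nv (\<Prod>a\<in>S0. 1 + z a) = 1" by (rule nv_prod_one_plus_eq_one) (rule assms(3))
  moreover have "nv ((\<Prod>a\<in>S - S0. 1 + z a) - 1) \<le> b"
    by (rule nv_prod_one_plus_minus_one_le) (use assms in auto)
  ultimately show ?thesis by (simp add: nv_mult)
qed

lemma uniform_limit_of_uniform_Cauchy: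
  fixes s :: "nat \<Rightarrow> 'x \<Rightarrow> 'c"
  assumes step: "\<And>d d' x. d \<le> d' \<Longrightarrow> x \<in> D \<Longrightarrow> nv (s d' x - s d x) \<le> \<beta> d"
    and mono: "\<And>d d'. d \<le> d' \<Longrightarrow> \<beta> d' \<le> \<beta> d"
    and small: "\<And>e. e > 0 \<Longrightarrow> \<exists>d. \<beta> d < e"
  shows "\<exists>P. \<forall>d. \<forall>x\<in>D. nv (s d x - P x) \<le> \<beta> d"
proof -
  have conv: "\<exists>L. conv_nv nv (\<lambda>d. s d x) L" if x: "x \<in> D" for x
  proof (rule nv_Cauchy_convergent, intro allI impI)
    fix e :: real assume "e > 0"
    then obtain d0 where d0: "\<beta> d0 < e" using small by blast
    have "nv (s d x - s d' x) < e" if "d \<ge> d0" "d' \<ge> d0" for d d'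
    proof (cases "d \<ge> d'")
      case True
      thus ?thesis using step[OF True x] mono[OF that(2)] d0 by linarith
    next
      case False
      thus ?thesis using step[of d d' x] x mono[OF that(1)] d0 nv_diff_sym[of "s d x"] by simp
    qed
    thus "\<exists>N. \<forall>d\<ge>N. \<forall>d'\<ge>N. nv (s d x - s d' x) < e" by blast
  qed
  define P where "P x = (SOME L. conv_nv nv (\<lambda>d. s d x) L)" for x
  have "nv (s d x - P x) \<le> \<beta> d" if x: "x \<in> D" for d x
  proof -
    have "conv_nv nv (\<lambda>d. s d x) (P x)" unfolding P_def using conv[OF x] by (rule someI_ex)
    hence lim: "(\<lambda>k. \<beta> d + nv (s k x - P x)) \<longlonglongrightarrow> \<beta> d + 0"
      unfolding conv_nv_def by (intro tendsto_add tendsto_const)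
    have "nv (s d x - P x) \<le> \<beta> d + nv (s k x - P x)" if "k \<ge> d" for k
    proof -
      have "s d x - P x = (s d x - s k x) + (s k x - P x)" by simp
      hence "nv (s d x - P x) \<le> max (nv (s d x - s k x)) (nv (s k x - P x))" by (metis nv_add_le_max)
      moreover have "nv (s d x - s k x) \<le> \<beta> d" using step[OF that x] nv_diff_sym[of "s d x"] by simp
      ultimately show ?thesis using nv_nonneg[of "s k x - P x"] nv_nonneg[of "s d x - s k x"] by linarith
    qed
    thus ?thesis using LIMSEQ_le_const[OF lim] by auto
  qed
  thus ?thesis by blast
qed

text \<open>No summability is needed: by the ultrametric inequality, enlarging a finite product beyond
  all \<open>a\<close> of degree \<open>< d\<close> moves it by at most the bound for degree \<open>d\<close>.\<close>

lemma prod_unif_conv_of_degree_bound: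
  fixes F :: "'f poly \<Rightarrow> 'x \<Rightarrow> 'c"
  assumes bd: "\<And>a x. a \<noteq> 0 \<Longrightarrow> x \<in> D \<Longrightarrow> nv (F a x) \<le> (1/2) ^ Suc (degree a div 2)"
  shows "prod_unif_conv nv {a::'f poly. a \<noteq> 0} F D"
proof -
  define \<beta> :: "nat \<Rightarrow> real" where "\<beta> d = (1/2) ^ Suc (d div 2)" for d
  define Sd where "Sd d = {a::'f poly. a \<noteq> 0 \<and> degree a < d}" for d
  have finite_Sd: "finite (Sd d)" for d
    unfolding Sd_def by (rule finite_subset[OF _ finite_degree_less[of d]]) auto
  have \<beta>_mono: "d \<le> d' \<Longrightarrow> \<beta> d' \<le> \<beta> d" for d d'
    unfolding \<beta>_def by (intro power_decreasing) (auto intro: div_le_mono)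
  have \<beta>_nonneg: "0 \<le> \<beta> d" for d
    by (simp add: \<beta>_def)
  have \<beta>_le: "\<beta> d \<le> 1/2" for d
    using \<beta>_mono[of 0 d] by (simp add: \<beta>_def)
  have \<beta>_small: "\<exists>d. \<beta> d < e" if e: "e > 0" for e :: real
  proof -
    obtain k where k: "(1/2::real) ^ k < e" using real_arch_pow_inv[OF e, of "1/2"] by auto
    have "\<beta> (2 * k) \<le> (1/2) ^ k" unfolding \<beta>_def by (intro power_decreasing) auto
    thus ?thesis using k by (intro exI[of _ "2 * k"]) linarith
  qed
  have tail: "nv ((\<Prod>a\<in>S. 1 + F a x) - (\<Prod>a\<in>Sd d. 1 + F a x)) \<le> \<beta> d"
    if "finite S" "Sd d \<subseteq> S" "S \<subseteq> {a. a \<noteq> 0}" "x \<in> D" for S d x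
  proof (rule nv_prod_one_plus_diff_le)
    have F_le: "nv (F a x) \<le> \<beta> (degree a)" if "a \<in> S" for a
      using bd[OF _ \<open>x \<in> D\<close>, of a] that \<open>S \<subseteq> _\<close> by (auto simp: \<beta>_def)
    show "nv (F a x) \<le> \<beta> d" if "a \<in> S - Sd d" for a
    proof -
      have "d \<le> degree a" using that \<open>S \<subseteq> _\<close> by (auto simp: Sd_def)
      thus ?thesis using F_le[of a] that \<beta>_mono by force
    qed
    show "nv (F a x) < 1" if "a \<in> Sd d" for a
      using F_le[of a] that \<open>Sd d \<subseteq> S\<close> \<beta>_le[of "degree a"] by auto
  qed (use that \<beta>_le[of d] \<beta>_nonneg[of d] in auto)
  obtain P where P: "\<And>d x. x \<in> D \<Longrightarrow> nv ((\<Prod>a\<in>Sd d. 1 + F a x) - P x) \<le> \<beta> d"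
  proof -
    have "\<exists>P. \<forall>d. \<forall>x\<in>D. nv ((\<Prod>a\<in>Sd d. 1 + F a x) - P x) \<le> \<beta> d"
    proof (rule uniform_limit_of_uniform_Cauchy[OF _ \<beta>_mono \<beta>_small])
      show "nv ((\<Prod>a\<in>Sd d'. 1 + F a x) - (\<Prod>a\<in>Sd d. 1 + F a x)) \<le> \<beta> d"
        if "d \<le> d'" "x \<in> D" for d d' x
        using that by (intro tail finite_Sd) (auto simp: Sd_def)
    qed
    thus ?thesis using that by blast
  qed
  show ?thesis unfolding prod_unif_conv_def
  proof (intro exI[of _ P] allI impI)
    fix e :: real assume "e > 0"
    then obtain d where d: "\<beta> d < e" using \<beta>_small by blast
    have "nv ((\<Prod>a\<in>S. 1 + F a x) - P x) < e"
      if "finite S" "Sd d \<subseteq> S" "S \<subseteq> {a. a \<noteq> 0}" "x \<in> D" for S x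
    proof -
      have "nv (((\<Prod>a\<in>S. 1 + F a x) - (\<Prod>a\<in>Sd d. 1 + F a x))
          + ((\<Prod>a\<in>Sd d. 1 + F a x) - P x)) \<le> \<beta> d"
        by (rule nv_add_le[OF tail[OF that] P[OF that(4)]])
      hence "nv ((\<Prod>a\<in>S. 1 + F a x) - P x) \<le> \<beta> d" by (simp only: add_diff_eq diff_add_cancel)
      thus ?thesis using d by linarith
    qed
    moreover have "Sd d \<subseteq> {a. a \<noteq> 0}" by (auto simp: Sd_def)
    ultimately show "\<exists>S0. finite S0 \<and> S0 \<subseteq> {a. a \<noteq> 0} \<and> (\<forall>S. finite S \<and> S0 \<subseteq> S \<and>
        S \<subseteq> {a. a \<noteq> 0} \<longrightarrow> (\<forall>x\<in>D. nv ((\<Prod>a\<in>S. 1 + F a x) - P x) < e))"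
      by (intro exI[of _ "Sd d"] conjI allI impI ballI finite_Sd) auto
  qed
qed

end

section \<open>The lattice of a point of \<open>\<Omega>\<^sub>n\<close>\<close>

locale Omega_n_point = Cinf \<iota> nv for \<iota> :: "'f::{finite,field} fls \<Rightarrow> 'c::field" and nv +
  fixes \<xi> :: 'c and m n :: nat and w :: "nat \<Rightarrow> 'c"
  assumes m_pos: "m \<ge> 1" and w_in: "w \<in> Omega_n \<iota> nv \<xi> m n"
begin

abbreviation "L \<equiv> lattice \<iota> m w"
abbreviation "R \<equiv> vec_norm nv m w"

lemma w_in_Omega: "w \<in> Omega \<iota> \<xi> m" using w_in by (simp add: Omega_n_def)

lemma w_last: "w (m - 1) = \<xi>" using w_in_Omega by (simp add: Omega_def)
lemma w_independent: "(\<Sum>j<m. \<iota> (h j) * w j) = 0 \<Longrightarrow> j < m \<Longrightarrow> h j = 0"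
  using w_in_Omega by (simp add: Omega_def)

lemma imag_norm_w_ge: "imag_norm \<iota> nv m w \<ge> real CARD('f) powr (- real n) * R"
  using w_in by (simp add: Omega_n_def)

lemma sum_single_coord: "j0 < m \<Longrightarrow> (\<Sum>j<m. \<iota> (if j = j0 then c else 0) * w j) = \<iota> c * w j0"
proof -
  assume j0: "j0 < m"
  have "(\<Sum>j<m. \<iota> (if j = j0 then c else 0) * w j) = (\<Sum>j<m. if j = j0 then \<iota> c * w j else 0)"
    by (intro sum.cong refl) simp
  also have "\<dots> = \<iota> c * w j0" using j0 by (simp add: sum.delta)
  finally show ?thesis .
qed

lemma w_nonzero: "j < m \<Longrightarrow> w j \<noteq> 0"
proof
  assume j: "j < m" and w0: "w j = 0"
  have "(\<Sum>k<m. \<iota> (if k = j then 1 else 0) * w k) = 0" using sum_single_coord[OF j, of 1] w0 by simp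
  from w_independent[OF this j] show False by simp
qed

lemma xi_nonzero: "\<xi> \<noteq> 0" using w_nonzero[of "m - 1"] w_last m_pos by simp

lemma nv_w_le_R: "j < m \<Longrightarrow> nv (w j) \<le> R"
  unfolding vec_norm_def by (intro Max_ge) auto

lemma nv_xi_le_R: "R \<ge> nv \<xi>" using nv_w_le_R[of "m - 1"] w_last m_pos by simp

lemma R_pos: "R > 0" using nv_xi_le_R xi_nonzero nv_eq_0[of \<xi>] nv_nonneg[of \<xi>] by linarith

lemma nv_linear_form_ge:
  assumes "(MAX j\<in>{..<m}. absF (h j)) = 1"
  shows "nv (\<Sum>j<m. \<iota> (h j) * w j) \<ge> real CARD('f) powr (- real n) * R"
proof -
  have "imag_norm \<iota> nv m w \<le> nv (\<Sum>j<m. \<iota> (h j) * w j)"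
    unfolding imag_norm_def
  proof (rule cInf_lower)
    show "nv (\<Sum>j<m. \<iota> (h j) * w j) \<in> {nv (\<Sum>j<m. \<iota> (h j) * w j) |h. (MAX j\<in>{..<m}. absF (h j)) = 1}"
      using assms by blast
    show "bdd_below {nv (\<Sum>j<m. \<iota> (h j) * w j) |h. (MAX j\<in>{..<m}. absF (h j)) = 1}"
      by (rule bdd_belowI[of _ 0]) auto
  qed
  thus ?thesis using imag_norm_w_ge by linarith
qed

lemma R_le_xi: "R \<le> real CARD('f) ^ n * nv \<xi>"
proof -
  define h :: "nat \<Rightarrow> 'f fls" where "h = (\<lambda>j. if j = m - 1 then 1 else 0)"
  have "(MAX j\<in>{..<m}. absF (h j)) = 1"
  proof (rule Max_eqI)
    show "finite ((\<lambda>j. absF (h j)) ` {..<m})" by simp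
  next
    fix y assume "y \<in> (\<lambda>j. absF (h j)) ` {..<m}" thus "y \<le> 1" by (auto simp: h_def absF_def)
  next
    show "1 \<in> (\<lambda>j. absF (h j)) ` {..<m}" using m_pos by (auto simp: h_def intro!: image_eqI[of _ _ "m - 1"])
  qed
  hence "nv (\<Sum>j<m. \<iota> (h j) * w j) \<ge> real CARD('f) powr (- real n) * R" by (rule nv_linear_form_ge)
  moreover have "(\<Sum>j<m. \<iota> (h j) * w j) = \<xi>" unfolding h_def using sum_single_coord[of "m - 1" 1] m_pos w_last by simp
  ultimately have "real CARD('f) powr (- real n) * R \<le> nv \<xi>" by simp
  hence "R \<le> nv \<xi> / real CARD('f) powr (- real n)" using CARD_ge_2 by (simp add: field_simps)
  also have "\<dots> = real CARD('f) ^ n * nv \<xi>" using CARD_ge_2 by (simp add: powr_minus divide_inverse powr_realpow)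
  finally show ?thesis .
qed

lemma nv_linear_form_ge_coeff:
  assumes j: "j < m"
  shows "nv (\<Sum>j<m. \<iota> (h j) * w j) \<ge> absF (h j) * (real CARD('f) powr (- real n) * R)"
proof -
  define A where "A = (MAX j\<in>{..<m}. absF (h j))"
  have "0 \<in> {..<m}" using m_pos by simp
  hence "A \<in> (\<lambda>j. absF (h j)) ` {..<m}" unfolding A_def by (intro Max_in) auto
  then obtain j0 where j0: "j0 < m" "absF (h j0) = A" by auto
  have hjA: "absF (h j) \<le> A" using j unfolding A_def by (intro Max_ge) auto
  show ?thesis
  proof (cases "h j0 = 0")
    case True
    hence "A = 0" using j0 by (simp add: absF_def)
    hence "absF (h j) = 0" using hjA absF_nonneg[of "h j"] by linarith
    thus ?thesis by simp
  next
    case False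
    define h' where "h' = (\<lambda>j. h j / h j0)"
    have Apos: "A > 0" using False j0 absF_0_iff absF_nonneg by (metis less_eq_real_def)
    have "(MAX j\<in>{..<m}. absF (h' j)) = 1"
      unfolding h'_def using j0 False unfolding A_def by (intro MAX_absF_divide_max) simp_all
    hence I: "nv (\<Sum>j<m. \<iota> (h' j) * w j) \<ge> real CARD('f) powr (- real n) * R" by (rule nv_linear_form_ge)
    have "(\<Sum>j<m. \<iota> (h j) * w j) = \<iota> (h j0) * (\<Sum>j<m. \<iota> (h' j) * w j)"
      unfolding sum_distrib_left
    proof (intro sum.cong refl)
      fix k
      have "h k = h j0 * h' k" using False by (simp add: h'_def)
      thus "\<iota> (h k) * w k = \<iota> (h j0) * (\<iota> (h' k) * w k)" by (simp add: iota_mult)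
    qed
    hence "nv (\<Sum>j<m. \<iota> (h j) * w j) = A * nv (\<Sum>j<m. \<iota> (h' j) * w j)"
      using j0 by (simp add: nv_mult nv_iota)
    also have "\<dots> \<ge> A * (real CARD('f) powr (- real n) * R)" using I Apos by simp
    finally have "nv (\<Sum>j<m. \<iota> (h j) * w j) \<ge> A * (real CARD('f) powr (- real n) * R)" .
    moreover have "A * (real CARD('f) powr (- real n) * R) \<ge> absF (h j) * (real CARD('f) powr (- real n) * R)"
      using hjA R_pos by (intro mult_right_mono) auto
    ultimately show ?thesis by linarith
  qed
qed

definition lat_vec :: "(nat \<Rightarrow> 'f poly) \<Rightarrow> 'c" where "lat_vec a = (\<Sum>j<m. \<iota> (polyF (a j)) * w j)"

lemma mem_lattice_iff: "x \<in> L \<longleftrightarrow> (\<exists>a. x = lat_vec a)"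
  by (simp add: lattice_def lat_vec_def)

lemma lat_vec_in: "lat_vec a \<in> L" using mem_lattice_iff by blast

lemma nv_lat_vec_ge:
  "j < m \<Longrightarrow> a j \<noteq> 0 \<Longrightarrow>
    nv (lat_vec a) \<ge> real CARD('f) ^ degree (a j) * (real CARD('f) powr (- real n) * R)"
  unfolding lat_vec_def using nv_linear_form_ge_coeff[of j "\<lambda>j. polyF (a j)"] by (simp add: absF_polyF)

lemma lat_vec_0: "(\<And>j. j < m \<Longrightarrow> a j = 0) \<Longrightarrow> lat_vec a = 0"
  unfolding lat_vec_def by simp

lemma nv_lattice_ge: "x \<in> L \<Longrightarrow> x \<noteq> 0 \<Longrightarrow> nv x \<ge> real CARD('f) powr (- real n) * R"
proof -
  assume "x \<in> L" "x \<noteq> 0"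
  then obtain a where a: "x = lat_vec a" using mem_lattice_iff by blast
  then obtain j where j: "j < m" "a j \<noteq> 0" using lat_vec_0 \<open>x \<noteq> 0\<close> by blast
  have "real CARD('f) ^ degree (a j) \<ge> 1" using CARD_ge_2 by simp
  moreover have "real CARD('f) powr (- real n) * R \<ge> 0" using R_pos by simp
  ultimately have "real CARD('f) ^ degree (a j) * (real CARD('f) powr (- real n) * R) \<ge> 1 * (real CARD('f) powr (- real n) * R)"
    by (intro mult_right_mono)
  hence "1 * (real CARD('f) powr (- real n) * R) \<le> nv (lat_vec a)"
    using nv_lat_vec_ge[of j a, OF j] by (rule order_trans)
  thus ?thesis unfolding a by (simp only: mult_1)
qed

lemma lat_vec_add: "lat_vec a + lat_vec b = lat_vec (\<lambda>j. a j + b j)"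
  unfolding lat_vec_def by (simp add: sum.distrib[symmetric] polyF_add iota_add algebra_simps)

lemma lat_vec_diff: "lat_vec a - lat_vec b = lat_vec (\<lambda>j. a j - b j)"
  unfolding lat_vec_def by (simp add: sum_subtractf[symmetric] polyF_diff iota_diff algebra_simps)

lemma lattice_0: "0 \<in> L" using lat_vec_0[of "\<lambda>_. 0"] lat_vec_in by metis

lemma lattice_add: "x \<in> L \<Longrightarrow> y \<in> L \<Longrightarrow> x + y \<in> L"
  using mem_lattice_iff lat_vec_add by metis

lemma lattice_diff: "x \<in> L \<Longrightarrow> y \<in> L \<Longrightarrow> x - y \<in> L"
  using mem_lattice_iff lat_vec_diff by metis

text \<open>Since \<open>R \<ge> |\<xi>|\<close>, this degree bound for the coordinates of lattice points in a ball
  does not depend on \<open>w\<close>, only on \<open>n\<close> and \<open>|\<xi>|\<close>.\<close>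

definition ball_degree :: "real \<Rightarrow> nat" where
  "ball_degree B = nat \<lceil>B * real CARD('f) ^ n / nv \<xi>\<rceil> + 1"

lemma degree_lat_vec_coord_less:
  assumes j: "j < m" and aj: "a j \<noteq> 0" and B: "nv (lat_vec a) \<le> B"
  shows "degree (a j) < ball_degree B"
proof -
  define X where "X = real CARD('f) ^ degree (a j)"
  define c where "c = real CARD('f) powr (- real n)"
  have Xpos: "X \<ge> 0" "c > 0" unfolding X_def c_def using CARD_ge_2 by simp_all
  have cq: "c * real CARD('f) ^ n = 1" unfolding c_def using CARD_ge_2
    by (simp add: powr_minus powr_realpow)
  have "X * (c * R) \<le> B" unfolding X_def c_def using nv_lat_vec_ge[of j a, OF j aj] B by simp
  moreover have "X * (c * nv \<xi>) \<le> X * (c * R)"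
    using nv_xi_le_R Xpos by (intro mult_left_mono) simp_all
  ultimately have "X * nv \<xi> * (c * real CARD('f) ^ n) \<le> B * real CARD('f) ^ n"
    using CARD_ge_2 by (simp add: algebra_simps)
  moreover have "nv \<xi> > 0" using xi_nonzero nv_nonneg[of \<xi>] nv_eq_0[of \<xi>] by linarith
  ultimately have "X \<le> B * real CARD('f) ^ n / nv \<xi>"
    unfolding cq by (simp add: pos_le_divide_eq)
  moreover have "real (degree (a j)) < X"
  proof -
    have "real (degree (a j)) < 2 ^ degree (a j)"
      by (metis less_exp of_nat_less_iff of_nat_numeral of_nat_power)
    also have "(2::real) ^ degree (a j) \<le> X" unfolding X_def using CARD_ge_2 by (intro power_mono) simp_all
    finally show ?thesis .
  qed
  ultimately show ?thesis unfolding ball_degree_def by linarith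
qed

lemma lattice_ball_subset:
  "{x \<in> L. nv x \<le> B} \<subseteq> lat_vec ` poly_vecs_deg_lt m (ball_degree B)"
proof
  fix x assume x: "x \<in> {x \<in> L. nv x \<le> B}"
  then obtain a where "x = lat_vec a" using mem_lattice_iff by blast
  define a' where "a' = (\<lambda>j. if j < m then a j else 0)"
  have xa': "x = lat_vec a'" using \<open>x = lat_vec a\<close> unfolding lat_vec_def a'_def by simp
  have "degree (a' j) < ball_degree B" if "j < m" "a' j \<noteq> 0" for j
    using degree_lat_vec_coord_less[of j a', OF that] x xa' by simp
  hence "a' \<in> poly_vecs_deg_lt m (ball_degree B)"
    unfolding poly_vecs_deg_lt_def polys_deg_lt_iff by (auto simp: a'_def)
  thus "x \<in> lat_vec ` poly_vecs_deg_lt m (ball_degree B)" using xa' by blast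
qed

lemma finite_lattice_ball: "finite {x \<in> L. nv x \<le> B}"
  by (rule finite_subset[OF lattice_ball_subset finite_imageI[OF finite_poly_vecs_deg_lt]])

lemma card_lattice_ball_le:
  "card {x \<in> L. nv x \<le> B} \<le> card (poly_vecs_deg_lt m (ball_degree B) :: (nat \<Rightarrow> 'f poly) set)"
  by (rule order_trans[OF card_mono[OF finite_imageI[OF finite_poly_vecs_deg_lt] lattice_ball_subset]
        card_image_le[OF finite_poly_vecs_deg_lt]])

section \<open>The lattice exponential\<close>

definition lat_pts :: "nat \<Rightarrow> 'c set" where "lat_pts k = {l \<in> L. 0 < nv l \<and> nv l \<le> real k}"
definition exp_partial :: "nat \<Rightarrow> 'c \<Rightarrow> 'c" where "exp_partial k x = x * (\<Prod>l\<in>lat_pts k. 1 - x / l)"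

lemma expL_eq_partial: "expL nv L x = (THE y. conv_nv nv (\<lambda>k. exp_partial k x) y)"
  unfolding expL_def exp_partial_def lat_pts_def by simp

lemma finite_lat_pts: "finite (lat_pts k)"
  by (rule finite_subset[OF _ finite_lattice_ball[of "real k"]]) (auto simp: lat_pts_def)

lemma lat_pts_nonzero: "l \<in> lat_pts k \<Longrightarrow> l \<noteq> 0" by (auto simp: lat_pts_def)

definition lat_ball :: "nat \<Rightarrow> 'c set" where "lat_ball k = {l \<in> L. nv l \<le> real k}"

lemma finite_add_subgroup_lat_ball: "finite_add_subgroup (lat_ball k)"
proof
  show "finite (lat_ball k)" unfolding lat_ball_def by (rule finite_lattice_ball)
  show "0 \<in> lat_ball k" unfolding lat_ball_def using lattice_0 by simp
  fix x y assume "x \<in> lat_ball k" "y \<in> lat_ball k"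
  thus "x - y \<in> lat_ball k" unfolding lat_ball_def using lattice_diff by (auto intro: nv_diff_le)
qed

lemma lat_ball_eq: "lat_ball k = insert 0 (lat_pts k)"
  unfolding lat_ball_def lat_pts_def using lattice_0 nv_nonneg by (auto simp: less_le)

lemma exp_partial_eq_poly: "exp_partial k x = (\<Prod>l\<in>lat_pts k. - inverse l) * poly (finite_add_subgroup.subgroup_poly (lat_ball k)) x"
proof -
  have "poly (finite_add_subgroup.subgroup_poly (lat_ball k)) x = (\<Prod>v\<in>lat_ball k. x - v)"
    by (rule finite_add_subgroup.poly_subgroup_poly[OF finite_add_subgroup_lat_ball])
  also have "\<dots> = x * (\<Prod>v\<in>lat_pts k. x - v)"
    unfolding lat_ball_eq using finite_lat_pts lat_pts_nonzero by (subst prod.insert) auto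
  finally have P: "poly (finite_add_subgroup.subgroup_poly (lat_ball k)) x = x * (\<Prod>v\<in>lat_pts k. x - v)" .
  have "(\<Prod>l\<in>lat_pts k. 1 - x / l) = (\<Prod>l\<in>lat_pts k. (- inverse l) * (x - l))"
  proof (intro prod.cong refl)
    fix l assume "l \<in> lat_pts k"
    hence "l \<noteq> 0" by (rule lat_pts_nonzero)
    thus "1 - x / l = - inverse l * (x - l)" by (simp add: field_simps)
  qed
  also have "\<dots> = (\<Prod>l\<in>lat_pts k. - inverse l) * (\<Prod>l\<in>lat_pts k. x - l)" by (rule prod.distrib)
  finally show ?thesis unfolding exp_partial_def P by (simp add: algebra_simps)
qed

lemma exp_partial_add: "exp_partial k (x + y) = exp_partial k x + exp_partial k y"
  using finite_add_subgroup.additive_subgroup_poly[OF finite_add_subgroup_lat_ball]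
  unfolding exp_partial_eq_poly additive_poly_def by (simp add: algebra_simps)

lemma lat_pts_mono: "lat_pts k \<subseteq> lat_pts (Suc k)" by (auto simp: lat_pts_def)

lemma exp_partial_Suc: "exp_partial (Suc k) x = exp_partial k x * (\<Prod>l\<in>lat_pts (Suc k) - lat_pts k. 1 - x / l)"
proof -
  have "(\<Prod>l\<in>lat_pts (Suc k). 1 - x / l) = (\<Prod>l\<in>lat_pts (Suc k) - lat_pts k. 1 - x / l) * (\<Prod>l\<in>lat_pts k. 1 - x / l)"
    by (rule prod.subset_diff[OF lat_pts_mono finite_lat_pts])
  thus ?thesis unfolding exp_partial_def by (simp add: algebra_simps)
qed

lemma nv_new_lat_pt_gt: "l \<in> lat_pts (Suc k) - lat_pts k \<Longrightarrow> nv l > real k"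
  by (auto simp: lat_pts_def)

lemma nv_exp_partial_Suc:
  assumes "nv x < real k"
  shows "nv (exp_partial (Suc k) x) = nv (exp_partial k x)"
proof -
  have "nv (\<Prod>l\<in>lat_pts (Suc k) - lat_pts k. 1 + (- x / l)) = 1"
  proof (rule nv_prod_one_plus_eq_one)
    fix l assume l: "l \<in> lat_pts (Suc k) - lat_pts k"
    hence "nv l > real k" by (rule nv_new_lat_pt_gt)
    hence xl: "nv x < nv l" using assms by simp
    hence "nv l > 0" using nv_nonneg[of x] by linarith
    hence "nv x / nv l < 1" using xl by (simp add: divide_less_eq_1_pos)
    thus "nv (- x / l) < 1" by (simp add: nv_divide)
  qed
  thus ?thesis unfolding exp_partial_Suc by (simp add: nv_mult)
qed

lemma nv_exp_partial_step_le:
  assumes "nv x \<le> real k" "k > 0"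
  shows "nv (exp_partial (Suc k) x - exp_partial k x) \<le> nv (exp_partial k x) * (nv x / real k)"
proof -
  have B: "nv ((\<Prod>l\<in>lat_pts (Suc k) - lat_pts k. 1 + (- x / l)) - 1) \<le> nv x / real k"
  proof (rule nv_prod_one_plus_minus_one_le)
    show "finite (lat_pts (Suc k) - lat_pts k)" using finite_lat_pts by simp
    show "nv x / real k \<le> 1" using assms by simp
    show "0 \<le> nv x / real k" by simp
    fix l assume l: "l \<in> lat_pts (Suc k) - lat_pts k"
    hence lk: "nv l > real k" by (rule nv_new_lat_pt_gt)
    have "nv (- x / l) = nv x / nv l" by (simp add: nv_divide)
    also have "\<dots> \<le> nv x / real k" using lk assms(2) by (intro divide_left_mono) auto
    finally show "nv (- x / l) \<le> nv x / real k" .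
  qed
  have "exp_partial (Suc k) x - exp_partial k x = exp_partial k x * ((\<Prod>l\<in>lat_pts (Suc k) - lat_pts k. 1 + (- x / l)) - 1)"
    unfolding exp_partial_Suc by (simp add: algebra_simps)
  hence "nv (exp_partial (Suc k) x - exp_partial k x) = nv (exp_partial k x) * nv ((\<Prod>l\<in>lat_pts (Suc k) - lat_pts k. 1 + (- x / l)) - 1)"
    by (simp add: nv_mult)
  also have "\<dots> \<le> nv (exp_partial k x) * (nv x / real k)" using B by (intro mult_left_mono) auto
  finally show ?thesis .
qed

definition stable_index :: "'c \<Rightarrow> nat" where "stable_index x = nat \<lceil>nv x\<rceil> + 1"

lemma stable_index_gt: "real (stable_index x) > nv x"
  unfolding stable_index_def by linarith

lemma nv_exp_partial_stable:
  assumes "k \<ge> stable_index x"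
  shows "nv (exp_partial k x) = nv (exp_partial (stable_index x) x)"
  using assms
proof (induction k rule: dec_induct)
  case (step k)
  hence "nv x < real k" using stable_index_gt[of x] by linarith
  thus ?case using nv_exp_partial_Suc step.IH by simp
qed simp

lemma exp_partial_convergent: "\<exists>y. conv_nv nv (\<lambda>k. exp_partial k x) y"
proof (rule conv_nv_of_small_steps)
  fix e :: real assume e: "e > 0"
  define c where "c = nv (exp_partial (stable_index x) x) * nv x"
  have c0: "c \<ge> 0" unfolding c_def by simp
  obtain N0 :: nat where N0: "real N0 > c / e" using reals_Archimedean2 by blast
  define N where "N = max N0 (stable_index x)"
  have "nv (exp_partial (Suc k) x - exp_partial k x) < e" if k: "k \<ge> N" for k
  proof -
    have kK: "k \<ge> stable_index x" using k unfolding N_def by simp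
    hence kpos: "k > 0" unfolding stable_index_def by simp
    have "real (stable_index x) \<le> real k" using kK by simp
    hence "nv x \<le> real k" using stable_index_gt[of x] by linarith
    hence s1: "nv (exp_partial (Suc k) x - exp_partial k x) \<le> nv (exp_partial k x) * (nv x / real k)" using kpos by (rule nv_exp_partial_step_le)
    have s2: "nv (exp_partial k x) * (nv x / real k) = c / real k" unfolding c_def using nv_exp_partial_stable[OF kK] by simp
    have "c / e \<ge> 0" using c0 e by simp
    hence N0pos: "real N0 > 0" using N0 by linarith
    have kN: "real N0 \<le> real k" using k unfolding N_def by simp
    have s3: "c / real k \<le> c / real N0" using c0 N0pos kN by (intro divide_left_mono) auto
    have "c < real N0 * e" using N0 e by (simp add: divide_less_eq)
    hence s4: "c / real N0 < e" using N0pos by (simp add: pos_divide_less_eq mult.commute)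
    show ?thesis using s1 s2 s3 s4 by linarith
  qed
  thus "\<exists>N. \<forall>k\<ge>N. nv (exp_partial (Suc k) x - exp_partial k x) < e" by blast
qed

lemma exp_partial_conv_expL: "conv_nv nv (\<lambda>k. exp_partial k x) (expL nv L x)"
proof -
  obtain y where y: "conv_nv nv (\<lambda>k. exp_partial k x) y" using exp_partial_convergent by blast
  have "(THE y. conv_nv nv (\<lambda>k. exp_partial k x) y) = y"
    by (rule the_equality[of "\<lambda>y. conv_nv nv (\<lambda>k. exp_partial k x) y" y, OF y]) (rule conv_nv_unique[OF _ y])
  thus ?thesis using y expL_eq_partial by simp
qed

abbreviation "E \<equiv> expL nv L"

lemma expL_add: "E (x + y) = E x + E y"
proof -
  have "conv_nv nv (\<lambda>k. exp_partial k x + exp_partial k y) (E x + E y)" by (intro conv_nv_add exp_partial_conv_expL)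
  hence "conv_nv nv (\<lambda>k. exp_partial k (x + y)) (E x + E y)" by (simp add: exp_partial_add)
  with exp_partial_conv_expL[of "x + y"] show ?thesis by (rule conv_nv_unique)
qed

lemma expL_0: "E 0 = 0"
proof -
  have "E 0 = E 0 + E 0" using expL_add[of 0 0] by simp
  thus ?thesis by (simp only: add_cancel_right_right)
qed

lemma expL_diff: "E (x - y) = E x - E y"
proof -
  have "E x = E (x - y) + E y" using expL_add[of "x - y" y] by (simp only: diff_add_cancel)
  thus ?thesis by (simp only: add_diff_cancel_right')
qed

lemma exp_partial_lattice:
  assumes l: "l \<in> L" and l0: "l \<noteq> 0" and k: "k \<ge> stable_index l"
  shows "exp_partial k l = 0"
proof -
  have "nv l > 0" using l0 nv_nonneg[of l] nv_eq_0[of l] by linarith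
  moreover have "real (stable_index l) \<le> real k" using k by simp
  hence "nv l \<le> real k" using stable_index_gt[of l] by linarith
  ultimately have lk: "l \<in> lat_pts k" using l unfolding lat_pts_def by simp
  have z: "1 - l / l = 0" using l0 by simp
  have "(\<Prod>l'\<in>lat_pts k. 1 - l / l') = 0"
    by (rule prod_zero[OF finite_lat_pts]) (use lk z in blast)
  thus ?thesis unfolding exp_partial_def by simp
qed

lemma expL_lattice:
  assumes l: "l \<in> L"
  shows "E l = 0"
proof (cases "l = 0")
  case True thus ?thesis using expL_0 by simp
next
  case False
  have c0: "conv_nv nv (\<lambda>k. 0) 0" by (simp add: conv_nv_def)
  have "conv_nv nv (\<lambda>k. exp_partial k l) 0"
  proof (rule conv_nv_eventually_eq[OF c0])
    fix k assume "stable_index l \<le> k"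
    thus "0 = exp_partial k l" using exp_partial_lattice[OF l False] by simp
  qed
  with exp_partial_conv_expL[of l] show ?thesis by (rule conv_nv_unique)
qed

lemma nv_expL: "nv (E x) = nv (exp_partial (stable_index x) x)"
proof -
  define c where "c = nv (exp_partial (stable_index x) x)"
  have lim: "(\<lambda>k. nv (exp_partial k x - E x)) \<longlonglongrightarrow> 0" using exp_partial_conv_expL[of x] by (simp add: conv_nv_def)
  have "\<bar>c - nv (E x)\<bar> \<le> 0"
  proof (rule LIMSEQ_le_const[OF lim])
    have "\<bar>c - nv (E x)\<bar> \<le> nv (exp_partial k x - E x)" if "k \<ge> stable_index x" for k
    proof -
      have "c = nv (exp_partial k x)" unfolding c_def using nv_exp_partial_stable[OF that] by simp
      thus ?thesis using nv_abs_diff[of "exp_partial k x" "E x"] by simp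
    qed
    thus "\<exists>N. \<forall>k\<ge>N. \<bar>c - nv (E x)\<bar> \<le> nv (exp_partial k x - E x)" by blast
  qed
  thus ?thesis unfolding c_def by simp
qed

lemma expL_nonzero: "x \<notin> L \<Longrightarrow> E x \<noteq> 0"
proof -
  assume x: "x \<notin> L"
  have x0: "x \<noteq> 0" using x lattice_0 by auto
  have "1 - x / l \<noteq> 0" if "l \<in> lat_pts (stable_index x)" for l
  proof -
    have lL: "l \<in> L" "l \<noteq> 0" using that by (auto simp: lat_pts_def)
    have "x \<noteq> l"
    proof
      assume "x = l" thus False using lL(1) x by simp
    qed
    thus "1 - x / l \<noteq> 0" using \<open>l \<noteq> 0\<close> by simp
  qed
  hence "\<not> (\<exists>l\<in>lat_pts (stable_index x). 1 - x / l = 0)" by blast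
  hence "(\<Prod>l\<in>lat_pts (stable_index x). 1 - x / l) \<noteq> 0" by (simp only: prod_zero_iff[OF finite_lat_pts] not_False_eq_True)
  hence "exp_partial (stable_index x) x \<noteq> 0" unfolding exp_partial_def using x0 by simp
  hence "nv (E x) \<noteq> 0" using nv_expL[of x] by simp
  thus ?thesis by simp
qed

text \<open>These constants depend on \<open>q\<close>, \<open>n\<close>, \<open>m\<close> and \<open>|\<xi>|\<close> only, not on \<open>w\<close>: this is the
  source of the uniformity on \<open>\<Omega>\<^sub>n\<close>.\<close>

definition ball_radius :: real where "ball_radius = real CARD('f) ^ n * nv \<xi> + 2"
definition ball_count :: nat where "ball_count = CARD('f) ^ (ball_degree ball_radius * m)"
definition exp_bound :: real where "exp_bound = real CARD('f) ^ n * nv \<xi> * (real CARD('f) ^ n) ^ ball_count"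

lemma ball_degree_mono: "B \<le> B' \<Longrightarrow> ball_degree B \<le> ball_degree B'"
proof -
  assume "B \<le> B'"
  hence "B * real CARD('f) ^ n \<le> B' * real CARD('f) ^ n" by (intro mult_right_mono) auto
  hence "B * real CARD('f) ^ n / nv \<xi> \<le> B' * real CARD('f) ^ n / nv \<xi>" by (intro divide_right_mono) auto
  hence "\<lceil>B * real CARD('f) ^ n / nv \<xi>\<rceil> \<le> \<lceil>B' * real CARD('f) ^ n / nv \<xi>\<rceil>" by (rule ceiling_mono)
  hence "nat \<lceil>B * real CARD('f) ^ n / nv \<xi>\<rceil> \<le> nat \<lceil>B' * real CARD('f) ^ n / nv \<xi>\<rceil>" by (rule nat_mono)
  thus ?thesis unfolding ball_degree_def by (rule add_right_mono)
qed

lemma card_lat_pts_stable_le: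
  assumes "nv x \<le> R"
  shows "card (lat_pts (stable_index x)) \<le> ball_count"
proof -
  have c1: "real_of_int \<lceil>nv x\<rceil> \<le> nv x + 1" by (rule of_int_ceiling_le_add_one)
  have c2: "real (stable_index x) = real_of_int \<lceil>nv x\<rceil> + 1" unfolding stable_index_def using nv_nonneg[of x] by simp
  have KB: "real (stable_index x) \<le> ball_radius"
    unfolding ball_radius_def using assms R_le_xi c1 c2 by linarith
  have "lat_pts (stable_index x) \<subseteq> {l \<in> L. nv l \<le> real (stable_index x)}" by (auto simp: lat_pts_def)
  hence "card (lat_pts (stable_index x)) \<le> card {l \<in> L. nv l \<le> real (stable_index x)}"
    by (intro card_mono finite_lattice_ball)
  also have "\<dots> \<le> card (poly_vecs_deg_lt m (ball_degree (real (stable_index x))) :: (nat \<Rightarrow> 'f poly) set)"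
    by (rule card_lattice_ball_le)
  also have "\<dots> = CARD('f) ^ (ball_degree (real (stable_index x)) * m)" by (rule card_poly_vecs_deg_lt)
  also have "\<dots> \<le> ball_count" unfolding ball_count_def using ball_degree_mono[OF KB]
    by (intro power_increasing) (auto simp: CARD_ge_2)
  finally show ?thesis .
qed

lemma nv_expL_le:
  assumes "nv x \<le> R"
  shows "nv (E x) \<le> exp_bound"
proof -
  have q1: "real CARD('f) ^ n \<ge> 1" using CARD_ge_2 by simp
  have fac: "nv (1 - x / l) \<le> real CARD('f) ^ n" if l: "l \<in> lat_pts (stable_index x)" for l
  proof -
    have lL: "l \<in> L" "l \<noteq> 0" using l by (auto simp: lat_pts_def)
    have lb: "nv l \<ge> real CARD('f) powr (- real n) * R" by (rule nv_lattice_ge[OF lL])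
    have pos: "real CARD('f) powr (- real n) * R > 0" using R_pos CARD_ge_2 by simp
    have "nv (x / l) = nv x / nv l" by (rule nv_divide)
    also have "\<dots> \<le> R / (real CARD('f) powr (- real n) * R)"
      using assms lb pos R_pos by (intro frac_le) auto
    also have "\<dots> = real CARD('f) ^ n"
    proof -
      have "real CARD('f) powr (- real n) = inverse (real CARD('f) ^ n)"
        using CARD_ge_2 by (simp add: powr_minus powr_realpow)
      thus ?thesis using R_pos CARD_ge_2 by (simp add: field_simps)
    qed
    finally have "nv (x / l) \<le> real CARD('f) ^ n" .
    thus ?thesis using q1 by (intro nv_diff_le) auto
  qed
  have "nv (E x) = nv x * (\<Prod>l\<in>lat_pts (stable_index x). nv (1 - x / l))"
    unfolding nv_expL exp_partial_def by (simp add: nv_mult nv_prod)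
  also have "\<dots> \<le> R * (\<Prod>l\<in>lat_pts (stable_index x). real CARD('f) ^ n)"
    using assms fac R_pos by (intro mult_mono prod_mono) (auto intro: prod_nonneg)
  also have "\<dots> = R * (real CARD('f) ^ n) ^ card (lat_pts (stable_index x))" by simp
  also have "\<dots> \<le> real CARD('f) ^ n * nv \<xi> * (real CARD('f) ^ n) ^ ball_count"
    using R_le_xi R_pos q1 card_lat_pts_stable_le[OF assms]
    by (intro mult_mono power_increasing) auto
  finally show ?thesis unfolding exp_bound_def .
qed

section \<open>Torsion and the polynomials \<open>f\<^sub>a\<close>\<close>

definition lattice_div :: "'f poly \<Rightarrow> 'c set" where "lattice_div a = {l. \<iota> (polyF a) * l \<in> L}"
text \<open>Representatives \<open>\<Sum> (r\<^sub>j / a) w\<^sub>j\<close>, \<open>deg r\<^sub>j < deg a\<close>, of \<open>a\<^sup>-\<^sup>1L / L\<close>.\<close>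

definition torsion_rep :: "'f poly \<Rightarrow> (nat \<Rightarrow> 'f poly) \<Rightarrow> 'c" where
  "torsion_rep a r = (\<Sum>j<m. \<iota> (polyF (r j)) / \<iota> (polyF a) * w j)"
definition torsion :: "'f poly \<Rightarrow> 'c set" where "torsion a = E ` lattice_div a"

lemma torsion_rep_in: "a \<noteq> 0 \<Longrightarrow> torsion_rep a r \<in> lattice_div a"
proof -
  assume a: "a \<noteq> 0"
  have "\<iota> (polyF a) * torsion_rep a r = lat_vec r"
    unfolding torsion_rep_def lat_vec_def sum_distrib_left using a by (intro sum.cong refl) (simp add: field_simps)
  thus ?thesis unfolding lattice_div_def using lat_vec_in by simp
qed

lemma nv_torsion_rep_le:
  assumes a: "a \<noteq> 0" and r: "r \<in> poly_vecs_deg_lt m (degree a)"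
  shows "nv (torsion_rep a r) \<le> R"
  unfolding torsion_rep_def
proof (rule nv_sum_le)
  show "0 \<le> R" using R_pos by simp
  fix j assume j: "j \<in> {..<m}"
  have rj: "r j = 0 \<or> degree (r j) < degree a" using r j by (simp add: poly_vecs_deg_lt_def polys_deg_lt_iff)
  have c: "nv (\<iota> (polyF (r j)) / \<iota> (polyF a)) \<le> 1"
  proof (cases "r j = 0")
    case False
    hence "degree (r j) < degree a" using rj by simp
    hence "real CARD('f) ^ degree (r j) \<le> real CARD('f) ^ degree a"
      using CARD_ge_2 by (intro power_increasing) auto
    thus ?thesis using False a CARD_ge_2 by (simp add: nv_divide nv_iota absF_polyF)
  qed simp
  have "nv (\<iota> (polyF (r j)) / \<iota> (polyF a) * w j) \<le> 1 * R"
    unfolding nv_mult using c nv_w_le_R[of j] j by (intro mult_mono) auto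
  thus "nv (\<iota> (polyF (r j)) / \<iota> (polyF a) * w j) \<le> R" by simp
qed

lemma torsion_rep_surj:
  assumes a: "a \<noteq> 0" and l: "l \<in> lattice_div a"
  shows "\<exists>r\<in>poly_vecs_deg_lt m (degree a). l - torsion_rep a r \<in> L"
proof -
  obtain b where b: "\<iota> (polyF a) * l = lat_vec b" using l mem_lattice_iff unfolding lattice_div_def by blast
  define r where "r = (\<lambda>j. if j < m then b j mod a else 0)"
  define d where "d = (\<lambda>j. b j div a)"
  have ia: "\<iota> (polyF a) \<noteq> 0" using a by simp
  have rD: "r \<in> poly_vecs_deg_lt m (degree a)"
    unfolding poly_vecs_deg_lt_def r_def polys_deg_lt_iff using degree_mod_less[OF a] by auto
  have "l = lat_vec b / \<iota> (polyF a)" using b ia by (simp add: field_simps)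
  also have "\<dots> = lat_vec d + torsion_rep a r"
    unfolding lat_vec_def torsion_rep_def sum_divide_distrib sum.distrib[symmetric]
  proof (intro sum.cong refl)
    fix j assume j: "j \<in> {..<m}"
    have "b j = a * d j + r j" using j by (simp add: d_def r_def)
    hence "polyF (b j) = polyF a * polyF (d j) + polyF (r j)" by (simp add: polyF_add polyF_mult)
    hence "\<iota> (polyF (b j)) = \<iota> (polyF a) * \<iota> (polyF (d j)) + \<iota> (polyF (r j))" by (simp add: iota_add iota_mult)
    thus "\<iota> (polyF (b j)) * w j / \<iota> (polyF a) = \<iota> (polyF (d j)) * w j + \<iota> (polyF (r j)) / \<iota> (polyF a) * w j"
      using ia by (simp add: field_simps)
  qed
  finally have eq: "l - torsion_rep a r = lat_vec d" by simp
  show ?thesis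
  proof (rule bexI[OF _ rD])
    show "l - torsion_rep a r \<in> L" unfolding eq by (rule lat_vec_in)
  qed
qed

lemma torsion_rep_inj_mod_lattice:
  assumes a: "a \<noteq> 0" and r: "r \<in> poly_vecs_deg_lt m (degree a)" and r': "r' \<in> poly_vecs_deg_lt m (degree a)"
    and d: "torsion_rep a r - torsion_rep a r' \<in> L"
  shows "r = r'"
proof
  fix j
  show "r j = r' j"
  proof (cases "j < m")
    case False thus ?thesis using r r' by (simp add: poly_vecs_deg_lt_def)
  next
    case True
    obtain c where c: "torsion_rep a r - torsion_rep a r' = lat_vec c" using d mem_lattice_iff by blast
    have ia: "\<iota> (polyF a) \<noteq> 0" using a by simp
    define h where "h = (\<lambda>j. polyF (r j - r' j) / polyF a - polyF (c j))"
    have "(\<Sum>j<m. \<iota> (h j) * w j) = torsion_rep a r - torsion_rep a r' - lat_vec c"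
      unfolding h_def torsion_rep_def lat_vec_def sum_subtractf[symmetric]
      by (intro sum.cong refl) (use ia in \<open>simp add: iota_diff iota_divide iota_add iota_mult polyF_diff field_simps\<close>)
    hence "(\<Sum>j<m. \<iota> (h j) * w j) = 0" using c by simp
    hence "h j = 0" using w_independent True by blast
    hence "polyF (r j - r' j) = polyF a * polyF (c j)" using a unfolding h_def by (simp add: field_simps)
    hence e: "r j - r' j = a * c j" by (simp add: polyF_mult[symmetric] polyF_inj)
    have "r j - r' j \<in> polys_deg_lt (degree a)"
    proof -
      have "r j \<in> polys_deg_lt (degree a)" "r' j \<in> polys_deg_lt (degree a)" using r r' True by (auto simp: poly_vecs_deg_lt_def)
      thus ?thesis by (auto simp: polys_deg_lt_def)
    qed
    hence "c j = 0"
    proof (rule contrapos_pp)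
      assume "c j \<noteq> 0"
      hence "degree (a * c j) \<ge> degree a" using a by (simp add: degree_mult_eq)
      moreover have "a * c j \<noteq> 0" using a \<open>c j \<noteq> 0\<close> by simp
      ultimately show "r j - r' j \<notin> polys_deg_lt (degree a)" unfolding e polys_deg_lt_iff by simp
    qed
    thus ?thesis using e by simp
  qed
qed

lemma inj_on_expL_torsion_rep: "a \<noteq> 0 \<Longrightarrow> inj_on (\<lambda>r. E (torsion_rep a r)) (poly_vecs_deg_lt m (degree a))"
proof (rule inj_onI)
  fix r r' assume a: "a \<noteq> 0" and rr: "r \<in> poly_vecs_deg_lt m (degree a)" "r' \<in> poly_vecs_deg_lt m (degree a)"
    and e: "E (torsion_rep a r) = E (torsion_rep a r')"
  have "E (torsion_rep a r - torsion_rep a r') = 0" using e by (simp add: expL_diff)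
  hence "torsion_rep a r - torsion_rep a r' \<in> L" using expL_nonzero by blast
  thus "r = r'" by (rule torsion_rep_inj_mod_lattice[OF a rr])
qed

lemma torsion_eq_image: "a \<noteq> 0 \<Longrightarrow> torsion a = (\<lambda>r. E (torsion_rep a r)) ` poly_vecs_deg_lt m (degree a)"
proof (intro equalityI subsetI)
  fix t assume a: "a \<noteq> 0" and t: "t \<in> torsion a"
  then obtain l where l: "l \<in> lattice_div a" "t = E l" unfolding torsion_def by blast
  obtain r where r: "r \<in> poly_vecs_deg_lt m (degree a)" "l - torsion_rep a r \<in> L" using torsion_rep_surj[OF a l(1)] by blast
  have "E l = E (l - torsion_rep a r) + E (torsion_rep a r)" using expL_add[of "l - torsion_rep a r" "torsion_rep a r"] by simp
  also have "\<dots> = E (torsion_rep a r)" using expL_lattice[OF r(2)] by simp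
  finally show "t \<in> (\<lambda>r. E (torsion_rep a r)) ` poly_vecs_deg_lt m (degree a)" using l r by blast
next
  fix t assume a: "a \<noteq> 0" and "t \<in> (\<lambda>r. E (torsion_rep a r)) ` poly_vecs_deg_lt m (degree a)"
  thus "t \<in> torsion a" unfolding torsion_def using torsion_rep_in[OF a] by blast
qed

lemma card_torsion: "a \<noteq> 0 \<Longrightarrow> card (torsion a) = CARD('f) ^ (m * degree a)"
  using card_image[OF inj_on_expL_torsion_rep] torsion_eq_image card_poly_vecs_deg_lt[of m "degree a", where 'a='f] by (simp add: mult.commute)

lemma finite_torsion: "a \<noteq> 0 \<Longrightarrow> finite (torsion a)"
  by (subst torsion_eq_image) (auto intro!: finite_imageI finite_poly_vecs_deg_lt)

lemma finite_add_subgroup_torsion: "a \<noteq> 0 \<Longrightarrow> finite_add_subgroup (torsion a)"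
proof
  assume a: "a \<noteq> 0"
  show "finite (torsion a)" using finite_torsion[OF a] .
  show "0 \<in> torsion a" unfolding torsion_def lattice_div_def using lattice_0 expL_0 by (auto intro!: image_eqI[of _ _ 0])
  fix x y assume "x \<in> torsion a" "y \<in> torsion a"
  then obtain lx ly where l: "lx \<in> lattice_div a" "ly \<in> lattice_div a" "x = E lx" "y = E ly" unfolding torsion_def by blast
  have "lx - ly \<in> lattice_div a" using l lattice_diff unfolding lattice_div_def by (simp add: right_diff_distrib)
  moreover have "x - y = E (lx - ly)" using l by (simp add: expL_diff)
  ultimately show "x - y \<in> torsion a" unfolding torsion_def by blast
qed

lemma nv_torsion_le: "a \<noteq> 0 \<Longrightarrow> t \<in> torsion a \<Longrightarrow> nv t \<le> exp_bound"
  using torsion_eq_image nv_torsion_rep_le nv_expL_le by auto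

definition lat_coset :: "'c \<Rightarrow> 'c set" where "lat_coset l = {l + \<mu> |\<mu>. \<mu> \<in> L}"

definition phi_cosets :: "'f poly \<Rightarrow> 'c set set" where
  "phi_cosets a = {{l + \<mu> |\<mu>. \<mu> \<in> L} | l. \<iota> (polyF a) * l \<in> L \<and> l \<notin> L}"
definition coset_exp :: "'c set \<Rightarrow> 'c" where "coset_exp C = E (SOME l. l \<in> C)"

lemma phi_cosets_eq: "phi_cosets a = lat_coset ` (lattice_div a - L)"
  unfolding phi_cosets_def lat_coset_def lattice_div_def by auto

lemma in_lat_coset: "l \<in> lat_coset l"
  unfolding lat_coset_def using lattice_0 by force

lemma expL_lat_coset: "x \<in> lat_coset l \<Longrightarrow> E x = E l"
  unfolding lat_coset_def using expL_add expL_lattice by auto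

lemma coset_exp_lat_coset: "coset_exp (lat_coset l) = E l"
proof -
  have "(SOME x. x \<in> lat_coset l) \<in> lat_coset l" using in_lat_coset by (rule someI)
  thus ?thesis unfolding coset_exp_def by (rule expL_lat_coset)
qed

lemma lat_coset_eq: "l1 - l2 \<in> L \<Longrightarrow> lat_coset l1 = lat_coset l2"
proof -
  assume d: "l1 - l2 \<in> L"
  have "lat_coset l1 \<subseteq> lat_coset l2" if "l1 - l2 \<in> L" for l1 l2
  proof
    fix x assume "x \<in> lat_coset l1"
    then obtain \<mu> where "\<mu> \<in> L" "x = l1 + \<mu>" unfolding lat_coset_def by blast
    hence "x = l2 + ((l1 - l2) + \<mu>)" "(l1 - l2) + \<mu> \<in> L" using that lattice_add by auto
    thus "x \<in> lat_coset l2" unfolding lat_coset_def by blast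
  qed
  moreover have "l2 - l1 \<in> L" using lattice_diff[OF lattice_0 d] by simp
  ultimately show ?thesis using d by blast
qed

lemma bij_betw_coset_exp: "a \<noteq> 0 \<Longrightarrow> bij_betw coset_exp (phi_cosets a) (torsion a - {0})"
  unfolding bij_betw_def
proof
  assume a: "a \<noteq> 0"
  show "inj_on coset_exp (phi_cosets a)"
  proof (rule inj_onI)
    fix C1 C2 assume "C1 \<in> phi_cosets a" "C2 \<in> phi_cosets a" and g: "coset_exp C1 = coset_exp C2"
    then obtain l1 l2 where l: "C1 = lat_coset l1" "C2 = lat_coset l2" unfolding phi_cosets_eq by blast
    have "E (l1 - l2) = 0" using g l by (simp add: coset_exp_lat_coset expL_diff)
    hence "l1 - l2 \<in> L" using expL_nonzero by blast
    thus "C1 = C2" using l lat_coset_eq by simp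
  qed
  show "coset_exp ` phi_cosets a = torsion a - {0}"
  proof (intro equalityI subsetI)
    fix t assume "t \<in> coset_exp ` phi_cosets a"
    then obtain l where l: "l \<in> lattice_div a" "l \<notin> L" "t = E l" unfolding phi_cosets_eq by (auto simp: coset_exp_lat_coset)
    thus "t \<in> torsion a - {0}" unfolding torsion_def using expL_nonzero by auto
  next
    fix t assume "t \<in> torsion a - {0}"
    then obtain l where l: "l \<in> lattice_div a" "t = E l" "t \<noteq> 0" unfolding torsion_def by auto
    hence "l \<notin> L" using expL_lattice by auto
    hence "lat_coset l \<in> phi_cosets a" using l unfolding phi_cosets_eq by blast
    thus "t \<in> coset_exp ` phi_cosets a" using l coset_exp_lat_coset by (metis image_eqI)
  qed
qed

definition torsion_poly :: "'f poly \<Rightarrow> 'c poly" where "torsion_poly a = (\<Prod>t\<in>torsion a. [:- t, 1:])"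

lemma drinfeld_phi_eq:
  assumes a: "a \<noteq> 0"
  shows "drinfeld_phi \<iota> nv L a = smult (\<iota> (polyF a) * (\<Prod>t\<in>torsion a - {0}. - inverse t)) (torsion_poly a)"
proof -
  have "(\<Prod>C\<in>phi_cosets a. [:1, - inverse (coset_exp C):]) = (\<Prod>t\<in>torsion a - {0}. [:1, - inverse t:])"
    by (rule prod.reindex_bij_betw[OF bij_betw_coset_exp[OF a]])
  also have "\<dots> = (\<Prod>t\<in>torsion a - {0}. smult (- inverse t) [:- t, 1:])"
    by (intro prod.cong refl) auto
  also have "\<dots> = smult (\<Prod>t\<in>torsion a - {0}. - inverse t) (\<Prod>t\<in>torsion a - {0}. [:- t, 1:])"
    by (rule prod_smult)
  finally have P: "(\<Prod>C\<in>phi_cosets a. [:1, - inverse (coset_exp C):])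
      = smult (\<Prod>t\<in>torsion a - {0}. - inverse t) (\<Prod>t\<in>torsion a - {0}. [:- t, 1:])" .
  have z: "0 \<in> torsion a" using finite_add_subgroup.zero_in_V[OF finite_add_subgroup_torsion[OF a]] .
  have torsion_poly: "torsion_poly a = [:0, 1:] * (\<Prod>t\<in>torsion a - {0}. [:- t, 1:])"
    unfolding torsion_poly_def using prod.remove[OF finite_torsion[OF a] z, of "\<lambda>t. [:- t, 1:]"] by simp
  have "drinfeld_phi \<iota> nv L a = smult (\<iota> (polyF a)) [:0, 1:] * (\<Prod>C\<in>phi_cosets a. [:1, - inverse (coset_exp C):])"
    unfolding drinfeld_phi_def phi_cosets_def coset_exp_def by simp
  also have "\<dots> = smult (\<iota> (polyF a) * (\<Prod>t\<in>torsion a - {0}. - inverse t)) (torsion_poly a)"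
    unfolding P torsion_poly by (simp add: mult_smult_left mult_smult_right ac_simps)
  finally show ?thesis .
qed

lemma degree_torsion_poly: "a \<noteq> 0 \<Longrightarrow> degree (torsion_poly a) = card (torsion a)"
  unfolding torsion_poly_def by (rule degree_prod_linear[OF finite_torsion])

lemma coeff_torsion_poly_card: "a \<noteq> 0 \<Longrightarrow> coeff (torsion_poly a) (card (torsion a)) = 1"
  unfolding torsion_poly_def by (rule coeff_prod_linear_card[OF finite_torsion])

lemma poly_f_poly:
  assumes a: "a \<noteq> 0" and rm: "r - 1 = m"
  shows "poly (f_poly \<iota> nv r w a) u = (\<Sum>i\<in>{1..card (torsion a)}. coeff (torsion_poly a) (card (torsion a) - i) * u ^ i)"
proof -
  define c where "c = \<iota> (polyF a) * (\<Prod>t\<in>torsion a - {0}. - inverse t)"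
  define N where "N = card (torsion a)"
  have c0: "c \<noteq> 0" unfolding c_def using a finite_torsion[OF a] by (simp add: prod_zero_iff)
  have phi: "drinfeld_phi \<iota> nv (lattice \<iota> (r - 1) w) a = smult c (torsion_poly a)"
    unfolding rm c_def by (rule drinfeld_phi_eq[OF a])
  have NN: "CARD('f) ^ ((r - 1) * degree a) = N" unfolding N_def rm card_torsion[OF a] ..
  have lead: "lead_coeff (smult c (torsion_poly a)) = c"
    using c0 degree_torsion_poly[OF a] coeff_torsion_poly_card[OF a] by simp
  have "poly (f_poly \<iota> nv r w a) u = inverse c * (\<Sum>i\<le>N. c * coeff (torsion_poly a) (N - i) * u ^ i) - 1"
    unfolding f_poly_def Let_def phi NN lead by (simp add: poly_sum poly_monom)
  also have "\<dots> = (\<Sum>i\<le>N. coeff (torsion_poly a) (N - i) * u ^ i) - 1"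
    using c0 by (simp add: sum_distrib_left field_simps)
  also have "(\<Sum>i\<le>N. coeff (torsion_poly a) (N - i) * u ^ i)
      = coeff (torsion_poly a) (N - 0) * u ^ 0 + (\<Sum>i\<in>{1..N}. coeff (torsion_poly a) (N - i) * u ^ i)"
  proof -
    have "{..N} = insert 0 {1..N}" by auto
    thus ?thesis by simp
  qed
  also have "coeff (torsion_poly a) (N - 0) = 1" using coeff_torsion_poly_card[OF a] unfolding N_def by simp
  finally show ?thesis unfolding N_def by simp
qed

lemma exp_bound_nonneg: "exp_bound \<ge> 0" unfolding exp_bound_def by simp

lemma card_torsion_gt_degree: "a \<noteq> 0 \<Longrightarrow> card (torsion a) > degree a"
proof -
  assume a: "a \<noteq> 0"
  have c2: "CARD('f) \<ge> 2" using CARD_ge_2 by simp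
  have "degree a < 2 ^ degree a" by (rule less_exp)
  also have "\<dots> \<le> CARD('f) ^ degree a" using c2 by (intro power_mono) auto
  also have "\<dots> \<le> CARD('f) ^ (m * degree a)" using m_pos c2 by (intro power_increasing) auto
  finally show ?thesis by (simp add: card_torsion[OF a])
qed

text \<open>The torsion polynomial is additive, so its nonzero coefficients sit at powers of the
  characteristic; as its degree \<open>card (torsion a)\<close> is one of them, every lower one is at most
  half of it.\<close>

lemma coeff_torsion_poly_nonzero_le_half:
  assumes a: "a \<noteq> 0" and j: "j < card (torsion a)" and c: "coeff (torsion_poly a) j \<noteq> 0"
  shows "2 * j \<le> card (torsion a)"
proof -
  interpret T: finite_add_subgroup "torsion a" by (rule finite_add_subgroup_torsion[OF a])
  have add: "additive_poly (torsion_poly a)"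
    unfolding torsion_poly_def T.subgroup_poly_def[symmetric] by (rule T.additive_subgroup_poly)
  obtain K where K: "card (torsion a) = CHAR('f) ^ K"
    using additive_poly_coeff_CHAR_power[OF add] coeff_torsion_poly_card[OF a] by force
  obtain k where k: "j = CHAR('f) ^ k" using additive_poly_coeff_CHAR_power[OF add c] by blast
  have p2: "CHAR('f) \<ge> 2" by (rule CHAR_ge_2)
  have "k < K" using j k K p2 by (simp add: power_strict_increasing_iff)
  have "2 * j \<le> CHAR('f) ^ Suc k" using k p2 by simp
  also have "\<dots> \<le> CHAR('f) ^ K" using \<open>k < K\<close> p2 by (intro power_increasing) auto
  finally show ?thesis using K by simp
qed

lemma nv_f_poly_le:
  assumes a: "a \<noteq> 0" and rm: "r - 1 = m" and u: "nv u * exp_bound \<le> 1/2"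
  shows "nv (poly (f_poly \<iota> nv r w a) u) \<le> (1/2) ^ Suc (degree a div 2)"
proof -
  define N where "N = card (torsion a)"
  have "nv (coeff (torsion_poly a) (N - i) * u ^ i) \<le> (1/2) ^ Suc (degree a div 2)"
    if i: "i \<in> {1..N}" for i
  proof (cases "coeff (torsion_poly a) (N - i) = 0")
    case False
    have "2 * (N - i) \<le> N"
      using coeff_torsion_poly_nonzero_le_half[OF a _ False] i unfolding N_def by auto
    hence iS: "i \<ge> Suc (degree a div 2)" using card_torsion_gt_degree[OF a] i unfolding N_def by linarith
    have "nv (coeff (torsion_poly a) (N - i)) \<le> exp_bound ^ (N - (N - i))"
      unfolding torsion_poly_def N_def
      by (rule nv_coeff_prod_linear_le[OF finite_torsion[OF a] nv_torsion_le[OF a] exp_bound_nonneg])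
        (simp_all only: diff_le_self)
    hence "nv (coeff (torsion_poly a) (N - i) * u ^ i) \<le> exp_bound ^ i * nv u ^ i"
      using i by (simp add: nv_mult nv_power mult_right_mono)
    also have "\<dots> = (nv u * exp_bound) ^ i" by (simp add: power_mult_distrib mult.commute)
    also have "\<dots> \<le> (1/2) ^ i" using u by (intro power_mono) (auto simp: exp_bound_nonneg)
    also have "\<dots> \<le> (1/2) ^ Suc (degree a div 2)" using iS by (intro power_decreasing) auto
    finally show ?thesis .
  qed simp
  thus ?thesis unfolding poly_f_poly[OF a rm] N_def[symmetric]
    by (intro nv_sum_le) auto
qed

end

lemma mult_le_half_of_less:
  fixes x M :: real
  assumes "0 \<le> x" "x < 1 / (2 * (\<bar>M\<bar> + 1))"
  shows "x * M \<le> 1/2"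
proof -
  have "x * M \<le> x * (\<bar>M\<bar> + 1)" using assms(1) by (intro mult_left_mono) auto
  also have "\<dots> \<le> 1 / (2 * (\<bar>M\<bar> + 1)) * (\<bar>M\<bar> + 1)" using assms by (intro mult_right_mono) auto
  also have "\<dots> = 1/2" by (simp add: field_simps)
  finally show ?thesis .
qed

text \<open>The normalisation of \<open>\<rho>\<close>, i.e. the particular value of \<open>\<xi>\<close>, plays no role.\<close>

theorem mainTheorem1:
  fixes \<iota> :: "'f::{finite,field} fls \<Rightarrow> 'c::field" and nv :: "'c \<Rightarrow> real"
    and \<rho> :: 'c and r :: nat
  assumes "is_Cinf \<iota> nv"
    and "\<rho> ^ (CARD('f) - 1) = - (\<iota> tF ^ CARD('f))"
    and "r \<ge> 2"
  shows "\<forall>n::nat. \<exists>rn>0. prod_unif_conv nv {a::'f poly. a \<noteq> 0}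
            (\<lambda>a (u, w). poly (f_poly \<iota> nv r w a) u)
            ({u. nv u < rn} \<times> Omega_n \<iota> nv (xi \<iota> nv \<rho>) (r - 1) n)"
proof
  fix n :: nat
  interpret Cinf \<iota> nv by standard (rule assms(1))
  define M where "M = Omega_n_point.exp_bound TYPE('f) nv (xi \<iota> nv \<rho>) (r - 1) n"
  define rn where "rn = 1 / (2 * (\<bar>M\<bar> + 1))"
  have "prod_unif_conv nv {a::'f poly. a \<noteq> 0} (\<lambda>a (u, w). poly (f_poly \<iota> nv r w a) u)
      ({u. nv u < rn} \<times> Omega_n \<iota> nv (xi \<iota> nv \<rho>) (r - 1) n)"
  proof (rule prod_unif_conv_of_degree_bound, clarify)
    fix a :: "'f poly" and u w
    assume a: "a \<noteq> 0" and u: "nv u < rn" and w: "w \<in> Omega_n \<iota> nv (xi \<iota> nv \<rho>) (r - 1) n"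
    interpret Omega_n_point \<iota> nv "xi \<iota> nv \<rho>" "r - 1" n w
      by unfold_locales (use w assms(3) in auto)
    have "nv u * exp_bound \<le> 1/2"
      using u unfolding rn_def M_def by (intro mult_le_half_of_less) simp_all
    thus "nv (poly (f_poly \<iota> nv r w a) u) \<le> (1/2) ^ Suc (degree a div 2)"
      by (rule nv_f_poly_le[OF a refl])
  qed
  moreover have "rn > 0" unfolding rn_def by (simp add: add_pos_nonneg)
  ultimately show "\<exists>rn>0. prod_unif_conv nv {a::'f poly. a \<noteq> 0}
      (\<lambda>a (u, w). poly (f_poly \<iota> nv r w a) u)
      ({u. nv u < rn} \<times> Omega_n \<iota> nv (xi \<iota> nv \<rho>) (r - 1) n)" by blast
qed

end
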